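(* A graph $G$ is a minimally $1/2$-tough claw-free graph if and only if $G$ is connected and can be obtained as follows: (1) take a tree $T$ on at least three vertices in which every vertex has degree at most $3$ and in which the set of vertices of degree $1$ or $3$ is an independent set; (2) for every vertex of degree $3$ in $T$, delete it and join its three neighbors pairwise by edges (forming a triangle).
   Context: All graphs are finite, simple and undirected. A graph is claw-free if it contains no induced subgraph isomorphic to $K_{1,3}$. $\omega(H)$ denotes the number of components of $H$. A cutset of $G$ is a vertex set $S$ with $G-S$ disconnected. For positive real $t$, $G$ is $t$-tough if $\omega(G-S)\le |S|/t$ for every cutset $S$; the toughness $\tau(G)$ is the largest such $t$, with $\tau(K_n)=\infty$ for all $n\ge1$. $G$ is minimally $t$-tough if $\tau(G)=t$ and $\tau(G-e)<t$ for every edge $e$ of $G$. *)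

theory Defs
  imports Main "HOL-Library.Extended_Real"
begin

definition graph :: "'a set \<Rightarrow> 'a set set \<Rightarrow> bool" where
  "graph V E \<longleftrightarrow> finite V \<and> (\<forall>e\<in>E. e \<subseteq> V \<and> card e = 2)"

text \<open>Reachability inside the subgraph induced by V (only edges with both ends in V).\<close>
definition reach :: "'a set \<Rightarrow> 'a set set \<Rightarrow> 'a \<Rightarrow> 'a \<Rightarrow> bool" where
  "reach V E = (\<lambda>x y. x \<in> V \<and> y \<in> V \<and> {x, y} \<in> E)\<^sup>*\<^sup>*"

definition num_comp :: "'a set \<Rightarrow> 'a set set \<Rightarrow> nat" where
  "num_comp V E = card ((\<lambda>v. {w \<in> V. reach V E v w}) ` V)"

definition connected_graph :: "'a set \<Rightarrow> 'a set set \<Rightarrow> bool" where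
  "connected_graph V E \<longleftrightarrow> num_comp V E = 1"

definition cutset :: "'a set \<Rightarrow> 'a set set \<Rightarrow> 'a set \<Rightarrow> bool" where
  "cutset V E S \<longleftrightarrow> S \<subseteq> V \<and> num_comp (V - S) E \<ge> 2"

definition tough :: "real \<Rightarrow> 'a set \<Rightarrow> 'a set set \<Rightarrow> bool" where
  "tough t V E \<longleftrightarrow> (\<forall>S. cutset V E S \<longrightarrow> real (num_comp (V - S) E) \<le> real (card S) / t)"

text \<open>Toughness: infinity if there is no cutset (complete graphs), otherwise the minimum
  of |S|/omega(G-S) over cutsets S, which is the largest t such that G is t-tough
  (0 for disconnected graphs).\<close>
definition toughness :: "'a set \<Rightarrow> 'a set set \<Rightarrow> ereal" where
  "toughness V E = (if \<exists>S. cutset V E S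
     then ereal (Min {real (card S) / real (num_comp (V - S) E) | S. cutset V E S})
     else \<infinity>)"

definition minimally_tough :: "real \<Rightarrow> 'a set \<Rightarrow> 'a set set \<Rightarrow> bool" where
  "minimally_tough t V E \<longleftrightarrow>
     toughness V E = ereal t \<and> (\<forall>e\<in>E. toughness V (E - {e}) < ereal t)"

definition claw_free :: "'a set \<Rightarrow> 'a set set \<Rightarrow> bool" where
  "claw_free V E \<longleftrightarrow> \<not> (\<exists>c\<in>V. \<exists>a\<in>V. \<exists>b\<in>V. \<exists>d\<in>V.
      distinct [c, a, b, d] \<and> {c, a} \<in> E \<and> {c, b} \<in> E \<and> {c, d} \<in> E \<and>
      {a, b} \<notin> E \<and> {a, d} \<notin> E \<and> {b, d} \<notin> E)"

definition degree :: "'a set set \<Rightarrow> 'a \<Rightarrow> nat" where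
  "degree E v = card {u. {u, v} \<in> E}"

definition independent :: "'a set set \<Rightarrow> 'a set \<Rightarrow> bool" where
  "independent E I \<longleftrightarrow> (\<forall>u\<in>I. \<forall>v\<in>I. {u, v} \<notin> E)"

definition has_cycle :: "'a set \<Rightarrow> 'a set set \<Rightarrow> bool" where
  "has_cycle V E \<longleftrightarrow> (\<exists>xs. length xs \<ge> 3 \<and> distinct xs \<and> set xs \<subseteq> V \<and>
     (\<forall>i < length xs - 1. {xs ! i, xs ! Suc i} \<in> E) \<and> {last xs, hd xs} \<in> E)"

definition tree :: "'a set \<Rightarrow> 'a set set \<Rightarrow> bool" where
  "tree V E \<longleftrightarrow> graph V E \<and> connected_graph V E \<and> \<not> has_cycle V E"

definition deg3 :: "'a set \<Rightarrow> 'a set set \<Rightarrow> 'a set" where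
  "deg3 V E = {v \<in> V. degree E v = 3}"

definition construct_V :: "'a set \<Rightarrow> 'a set set \<Rightarrow> 'a set" where
  "construct_V V E = V - deg3 V E"

definition construct_E :: "'a set \<Rightarrow> 'a set set \<Rightarrow> 'a set set" where
  "construct_E V E = {e \<in> E. e \<inter> deg3 V E = {}} \<union>
     {{x, y} | x y. x \<noteq> y \<and> (\<exists>w \<in> deg3 V E. {x, w} \<in> E \<and> {y, w} \<in> E)}"

end

theory Submission
  imports Defs "HOL-Library.Transitive_Closure_Table"
begin

text \<open>
  Both directions rest on the bound \<omega>(G - S) \<le> 2|S| for a connected claw-free graph G and
  nonempty S: every component of G - S sends an edge into S, and by claw-freeness a vertex of S
  sees at most two components.

  If G arises from a tree T, this bound gives toughness at least 1/2, and a degree-2 vertex of T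
  is a cut vertex of G, so the toughness is exactly 1/2. Deleting an edge of G either deletes a
  bridge (an edge of T) or deletes an edge xy of the triangle replacing a degree-3 vertex w of T;
  then the third neighbour z of w is a cut vertex leaving three components.

  Conversely, let G be minimally 1/2-tough and claw-free, and let uv be an edge that is not a
  bridge. Some cutset S of G - uv has more than 2|S| components; double counting the incidences
  between S and these components shows, with claw-freeness, that a single vertex s of S is
  adjacent to both u and v, separates them in G - uv, and has a neighbour adjacent to neither.
  Hence every edge lies in at most one triangle and triangles are edge-disjoint; replacing each
  triangle by a new vertex joined to its corners turns G into a tree T with the required degree
  conditions, and the construction applied to T gives back G.
\<close>

section \<open>Reachability and components\<close>

lemma reach_refl[simp]: "reach U E x x"
  by (simp add: reach_def)

lemma reach_step: "reach U E x y \<Longrightarrow> y \<in> U \<Longrightarrow> z \<in> U \<Longrightarrow> {y,z} \<in> E \<Longrightarrow> reach U E x z"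
proof -
  assume a: "reach U E x y" "y \<in> U" "z \<in> U" "{y,z} \<in> E"
  have "(\<lambda>x y. x \<in> U \<and> y \<in> U \<and> {x, y} \<in> E) y z" using a by simp
  with a(1) show ?thesis unfolding reach_def by (rule rtranclp.rtrancl_into_rtrancl)
qed

lemma reach_edge: "x \<in> U \<Longrightarrow> z \<in> U \<Longrightarrow> {x,z} \<in> E \<Longrightarrow> reach U E x z"
  using reach_step[of U E x x z] by simp

lemma reach_trans: "reach U E x y \<Longrightarrow> reach U E y z \<Longrightarrow> reach U E x z"
  unfolding reach_def by (rule rtranclp_trans[of _ x y z])

lemma reach_sym: "reach U E x y \<Longrightarrow> reach U E y x"
  unfolding reach_def
proof (induction rule: rtranclp_induct)
  case base then show ?case by simp
next
  case (step y z)
  then have "(\<lambda>x y. x \<in> U \<and> y \<in> U \<and> {x, y} \<in> E) z y" by (auto simp: insert_commute)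
  then show ?case using step.IH by (rule converse_rtranclp_into_rtranclp)
qed

lemma reach_induct[consumes 1, case_names base step]:
  assumes "reach U E x y" "P x"
    "\<And>y z. reach U E x y \<Longrightarrow> P y \<Longrightarrow> y \<in> U \<Longrightarrow> z \<in> U \<Longrightarrow> {y,z} \<in> E \<Longrightarrow> P z"
  shows "P y"
  using assms(1) unfolding reach_def
proof (induction rule: rtranclp_induct)
  case base then show ?case using assms(2) by simp
next
  case (step y z)
  then show ?case using assms(3)[of y z] unfolding reach_def by auto
qed

lemma reach_closed:
  assumes "reach U E x y" "x \<in> W" "\<And>p q. p \<in> W \<Longrightarrow> p \<in> U \<Longrightarrow> q \<in> U \<Longrightarrow> {p,q} \<in> E \<Longrightarrow> q \<in> W"
  shows "y \<in> W"
  using assms(1)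
proof (induction rule: reach_induct)
  case base show ?case by (rule assms(2))
next
  case (step y z) then show ?case using assms(3) by blast
qed

definition component :: "'a set \<Rightarrow> 'a set set \<Rightarrow> 'a \<Rightarrow> 'a set" where
  "component U E v = {w \<in> U. reach U E v w}"

lemma num_comp_eq_card_components: "num_comp U E = card (component U E ` U)"
  unfolding num_comp_def component_def by simp

lemma component_eq_iff: "x \<in> U \<Longrightarrow> y \<in> U \<Longrightarrow> component U E x = component U E y \<longleftrightarrow> reach U E x y"
proof
  assume "x \<in> U" "y \<in> U" "component U E x = component U E y"
  then have "y \<in> component U E x" unfolding component_def by auto
  then show "reach U E x y" unfolding component_def by auto
next
  assume "x \<in> U" "y \<in> U" "reach U E x y"
  then show "component U E x = component U E y" unfolding component_def
    by (auto intro: reach_trans reach_sym)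
qed

lemma component_subset: "component U E x \<subseteq> U" unfolding component_def by auto

lemma component_self: "x \<in> U \<Longrightarrow> x \<in> component U E x" unfolding component_def by auto

lemma mem_component: "y \<in> component U E x \<longleftrightarrow> y \<in> U \<and> reach U E x y" unfolding component_def by auto

lemma component_step: "p \<in> component U E x \<Longrightarrow> q \<in> U \<Longrightarrow> {p,q} \<in> E \<Longrightarrow> q \<in> component U E x"
proof -
  assume "p \<in> component U E x" "q \<in> U" "{p,q} \<in> E"
  then show ?thesis using reach_step[of U E x p q] unfolding component_def by blast
qed

lemma num_comp_ge_2I:
  assumes "finite U" "x \<in> U" "y \<in> U" "\<not> reach U E x y"
  shows "num_comp U E \<ge> 2"
proof -
  have "component U E x \<noteq> component U E y" using component_eq_iff[of x U y E] assms by blast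
  then have "card {component U E x, component U E y} = 2" by simp
  moreover have "{component U E x, component U E y} \<subseteq> component U E ` U" using assms by auto
  ultimately show ?thesis unfolding num_comp_eq_card_components using assms(1)
    by (metis card_mono finite_imageI)
qed

lemma num_comp_ge_3I:
  assumes "finite U" "x \<in> U" "y \<in> U" "z \<in> U" "\<not> reach U E x y" "\<not> reach U E x z" "\<not> reach U E y z"
  shows "num_comp U E \<ge> 3"
proof -
  have "component U E x \<noteq> component U E y" using component_eq_iff[of x U y E] assms by blast
  have "component U E x \<noteq> component U E z" using component_eq_iff[of x U z E] assms by blast
  have "component U E y \<noteq> component U E z" using component_eq_iff[of y U z E] assms by blast
  note this \<open>component U E x \<noteq> component U E y\<close> \<open>component U E x \<noteq> component U E z\<close>
  then have c3: "card {component U E x, component U E y, component U E z} = 3" by simp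
  have sub: "{component U E x, component U E y, component U E z} \<subseteq> component U E ` U" using assms by auto
  have fin: "finite (component U E ` U)" using assms(1) by simp
  have "card {component U E x, component U E y, component U E z} \<le> card (component U E ` U)"
    by (rule card_mono[OF fin sub])
  then show ?thesis unfolding num_comp_eq_card_components using c3 by simp
qed

lemma num_comp_le_1I:
  assumes "\<forall>x\<in>U. \<forall>y\<in>U. reach U E x y"
  shows "num_comp U E \<le> 1"
proof -
  have "component U E ` U \<subseteq> {component U E x} " if "x \<in> U" for x
  proof
    fix C assume "C \<in> component U E ` U"
    then obtain y where "y \<in> U" "C = component U E y" by auto
    then show "C \<in> {component U E x}" using component_eq_iff[of x U y E] that assms by auto
  qed
  note sub = this
  show ?thesis
  proof (cases "U = {}")
    case False
    then obtain x where "x \<in> U" by auto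
    then have "component U E ` U \<subseteq> {component U E x}" using sub by blast
    then have "card (component U E ` U) \<le> card {component U E x}" by (intro card_mono) auto
    then show ?thesis by (simp add: num_comp_eq_card_components)
  qed (simp add: num_comp_eq_card_components)
qed

lemma num_comp_ge_2_iff:
  assumes "finite U"
  shows "num_comp U E \<ge> 2 \<longleftrightarrow> (\<exists>x\<in>U. \<exists>y\<in>U. \<not> reach U E x y)"
proof
  assume "num_comp U E \<ge> 2"
  show "\<exists>x\<in>U. \<exists>y\<in>U. \<not> reach U E x y"
  proof (rule ccontr)
    assume "\<not> (\<exists>x\<in>U. \<exists>y\<in>U. \<not> reach U E x y)"
    then have "\<forall>x\<in>U. \<forall>y\<in>U. reach U E x y" by blast
    then have "num_comp U E \<le> 1" by (rule num_comp_le_1I)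
    with \<open>num_comp U E \<ge> 2\<close> show False by simp
  qed
next
  assume "\<exists>x\<in>U. \<exists>y\<in>U. \<not> reach U E x y"
  then obtain x y where "x \<in> U" "y \<in> U" "\<not> reach U E x y" by blast
  then show "num_comp U E \<ge> 2" using num_comp_ge_2I[OF assms] by blast
qed

lemma connected_graph_iff:
  assumes "finite U"
  shows "connected_graph U E \<longleftrightarrow> U \<noteq> {} \<and> (\<forall>x\<in>U. \<forall>y\<in>U. reach U E x y)"
proof
  assume c: "connected_graph U E"
  then have "U \<noteq> {}" unfolding connected_graph_def num_comp_def by (metis card.empty image_empty zero_neq_one)
  moreover have "\<forall>x\<in>U. \<forall>y\<in>U. reach U E x y"
  proof (intro ballI)
    fix x y assume "x \<in> U" "y \<in> U"
    show "reach U E x y"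
    proof (rule ccontr)
      assume "\<not> reach U E x y"
      then have "num_comp U E \<ge> 2" using num_comp_ge_2I[OF assms \<open>x \<in> U\<close> \<open>y \<in> U\<close>] by blast
      then show False using c unfolding connected_graph_def by simp
    qed
  qed
  ultimately show "U \<noteq> {} \<and> (\<forall>x\<in>U. \<forall>y\<in>U. reach U E x y)" by blast
next
  assume a: "U \<noteq> {} \<and> (\<forall>x\<in>U. \<forall>y\<in>U. reach U E x y)"
  then have "num_comp U E \<le> 1" using num_comp_le_1I[of U E] by simp
  moreover have "num_comp U E \<noteq> 0" using a assms unfolding num_comp_def by auto
  ultimately show "connected_graph U E" unfolding connected_graph_def by simp
qed

lemma component_of_mem:
  assumes "C \<in> component U E ` U" "c \<in> C"
  shows "C = component U E c"
proof -
  obtain x where x: "x \<in> U" "C = component U E x" using assms(1) by blast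
  then have "c \<in> U" "reach U E x c" using assms(2) unfolding component_def by auto
  then show ?thesis using x component_eq_iff[of x U c E] by simp
qed

lemma distinct_components_not_reach:
  assumes "C1 \<in> component U E ` U" "C2 \<in> component U E ` U" "C1 \<noteq> C2" "c1 \<in> C1" "c2 \<in> C2"
  shows "\<not> reach U E c1 c2 \<and> c1 \<noteq> c2"
proof -
  have e1: "C1 = component U E c1" by (rule component_of_mem[OF assms(1,4)])
  have e2: "C2 = component U E c2" by (rule component_of_mem[OF assms(2,5)])
  have u1: "c1 \<in> U" using assms(4) e1 component_subset[of U E c1] by blast
  have u2: "c2 \<in> U" using assms(5) e2 component_subset[of U E c2] by blast
  have "\<not> reach U E c1 c2" using e1 e2 assms(3) component_eq_iff[OF u1 u2, of E] by simp
  moreover have "c1 \<noteq> c2" using e1 e2 assms(3) by auto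
  ultimately show ?thesis by simp
qed

lemma component_adjacent_to_cutset:
  assumes conn: "\<forall>x\<in>V. \<forall>y\<in>V. reach V H x y" and S: "S \<subseteq> V" "S \<noteq> {}"
    and C: "C \<in> component (V - S) H ` (V - S)"
  shows "\<exists>c\<in>C. \<exists>s\<in>S. {c, s} \<in> H"
proof (rule ccontr)
  assume none: "\<not> (\<exists>c\<in>C. \<exists>s\<in>S. {c, s} \<in> H)"
  obtain x where x: "x \<in> V - S" "C = component (V - S) H x" using C by blast
  obtain s0 where s0: "s0 \<in> S" using S by blast
  have "reach V H x s0" using conn x s0 S by blast
  then have "s0 \<in> C"
  proof (rule reach_closed)
    show "x \<in> C" using component_self[of x "V - S" H] x by simp
    fix p q assume pq: "p \<in> C" "q \<in> V" "{p,q} \<in> H"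
    then have "q \<notin> S" using none by blast
    then show "q \<in> C" using component_step[of p "V - S" H x q] pq x by blast
  qed
  moreover have "C \<subseteq> V - S" using x(2) component_subset by simp
  ultimately show False using s0 by blast
qed

lemma components_mem: "C \<in> component U E ` U \<Longrightarrow> c \<in> C \<Longrightarrow> c \<in> U"
  unfolding component_def by blast

lemma reach_remove_edge:
  assumes "reach V (E - {{u,v}}) u v" "reach V E x y"
  shows "reach V (E - {{u,v}}) x y"
  using assms(2)
proof (induction rule: reach_induct)
  case base then show ?case by simp
next
  case (step y z)
  show ?case
  proof (cases "{y,z} = {u,v}")
    case False
    then have "{y,z} \<in> E - {{u,v}}" using \<open>{y,z} \<in> E\<close> by simp
    then show ?thesis using reach_step[OF step.IH \<open>y \<in> V\<close> \<open>z \<in> V\<close>] by blast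
  next
    case True
    then have "(y = u \<and> z = v) \<or> (y = v \<and> z = u)" by (simp add: doubleton_eq_iff)
    then have "reach V (E - {{u,v}}) y z" using assms(1) reach_sym[OF assms(1)] by blast
    then show ?thesis using reach_trans[OF step.IH] by blast
  qed
qed

lemma reach_Diff_not_subset:
  assumes "\<not> e \<subseteq> U"
  shows "reach U (E - {e}) = reach U E"
proof -
  have "(\<lambda>x y. x \<in> U \<and> y \<in> U \<and> {x, y} \<in> E - {e}) = (\<lambda>x y. x \<in> U \<and> y \<in> U \<and> {x, y} \<in> E)"
    using assms by (intro ext) auto
  then show ?thesis unfolding reach_def by simp
qed

lemma num_comp_Diff_not_subset:
  assumes "\<not> e \<subseteq> U"
  shows "num_comp U (E - {e}) = num_comp U E"
  unfolding num_comp_def using reach_Diff_not_subset[OF assms] by simp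

lemma reach_rtranclpI:
  assumes "reach W F a b" "\<And>p q. p \<in> W \<Longrightarrow> q \<in> W \<Longrightarrow> {p,q} \<in> F \<Longrightarrow> R\<^sup>*\<^sup>* p q"
  shows "R\<^sup>*\<^sup>* a b"
  using assms(1)
proof (induction rule: reach_induct)
  case base then show ?case by simp
next
  case (step y z)
  have "R\<^sup>*\<^sup>* y z" using assms(2) \<open>y \<in> W\<close> \<open>z \<in> W\<close> \<open>{y,z} \<in> F\<close> by blast
  with \<open>R\<^sup>*\<^sup>* a y\<close> show ?case by (rule rtranclp_trans)
qed

section \<open>Paths and cycles\<close>

lemma rtrancl_path_successively: "rtrancl_path r x xs y \<Longrightarrow> successively r (x # xs) \<and> last (x # xs) = y"
proof (induction rule: rtrancl_path.induct)
  case (base x) then show ?case by simp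
next
  case (step x y ys z)
  then show ?case by (cases ys) auto
qed

lemma has_cycleI:
  assumes "length xs \<ge> 3" "distinct xs" "set xs \<subseteq> V"
    "successively (\<lambda>a b. {a, b} \<in> E) xs" "{last xs, hd xs} \<in> E"
  shows "has_cycle V E"
proof -
  have "\<forall>i < length xs - 1. {xs ! i, xs ! Suc i} \<in> E"
    using assms(4) unfolding successively_conv_nth by auto
  then show ?thesis unfolding has_cycle_def using assms by blast
qed

lemma successively_mem_related:
  assumes "successively R zs" "length zs \<ge> 2" "z \<in> set zs"
  shows "\<exists>w. R z w \<or> R w z"
proof -
  obtain i where i: "i < length zs" "zs ! i = z" using assms(3) by (meson in_set_conv_nth)
  show ?thesis
  proof (cases "Suc i < length zs")
    case True
    then have "R (zs ! i) (zs ! Suc i)" using assms(1) successively_nth by blast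
    then show ?thesis using i by blast
  next
    case False
    then have "i \<ge> 1" using assms(2) i by linarith
    then obtain j where j: "i = Suc j" by (cases i) auto
    then have "R (zs ! j) (zs ! Suc j)" using assms(1) successively_nth i(1) by blast
    then show ?thesis using i j by blast
  qed
qed

text \<open>A path from a to b that avoids the tree path b, ps, a closes it to a cycle; the last
  hypothesis excludes the degenerate closed walks that are not cycles.\<close>
lemma no_cycle_closing_path:
  assumes no_cycle: "\<not> has_cycle VT ET" and rab: "R\<^sup>*\<^sup>* a b"
    and Redge: "\<And>x y. R x y \<Longrightarrow> {x,y} \<in> ET \<and> x \<in> VT \<and> y \<in> VT \<and> x \<notin> set ps \<and> y \<notin> set ps"
    and a: "a \<in> VT" "a \<notin> set ps" "b \<notin> set ps"
    and ps: "distinct ps" "set ps \<subseteq> VT"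
    and ch: "successively (\<lambda>x y. {x,y} \<in> ET) (b # ps @ [a])"
    and cond: "(a \<noteq> b \<and> (ps \<noteq> [] \<or> \<not> R a b)) \<or> (a = b \<and> length ps \<ge> 2)"
  shows False
proof -
  let ?E = "\<lambda>x y. {x,y} \<in> ET"
  have chb: "successively ?E (b # ps)" using ch
    by (metis append_Cons successively_append_iff)
  have chps: "successively ?E ps" using chb by (cases ps) auto
  have clos: "?E (last (b # ps)) a" using ch successively_append_iff[of ?E "b # ps" "[a]"] by simp
  show False
  proof (cases "a = b")
    case True
    then have l2: "length ps \<ge> 2" using cond by blast
    let ?L = "a # ps"
    have "length ?L \<ge> 3" using l2 by simp
    moreover have "distinct ?L" using ps a by simp
    moreover have "set ?L \<subseteq> VT" using ps a by simp
    moreover have "successively ?E ?L" using chb True by simp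
    moreover have "{last ?L, hd ?L} \<in> ET" using clos True l2 by (cases ps) auto
    ultimately show False using no_cycle has_cycleI by blast
  next
    case False
    note ab = False
    from rab obtain xs where "rtrancl_path R a xs b" by (auto simp: rtranclp_eq_rtrancl_path)
    then obtain xs' where p: "rtrancl_path R a xs' b" "distinct (a # xs')"
      by (rule rtrancl_path_distinct)
    have sl: "successively R (a # xs')" "last (a # xs') = b" using rtrancl_path_successively[OF p(1)] by auto
    have ne: "xs' \<noteq> []" using sl(2) ab by auto
    have len2: "length (a # xs') \<ge> 2" using ne by (cases xs') auto
    have ends: "\<forall>z \<in> set (a # xs'). z \<in> VT \<and> z \<notin> set ps"
    proof
      fix z assume "z \<in> set (a # xs')"
      then obtain w where "R z w \<or> R w z" using successively_mem_related[OF sl(1) len2] by blast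
      then show "z \<in> VT \<and> z \<notin> set ps" using Redge by blast
    qed
    let ?L = "(a # xs') @ ps"
    have sE: "successively ?E (a # xs')" using sl(1) Redge by (simp add: successively_mono)
    have "length ?L \<ge> 3"
    proof (cases ps)
      case Nil
      have "ps \<noteq> [] \<or> \<not> R a b" using cond ab by simp
      then have nR: "\<not> R a b" using Nil by simp
      have "length xs' \<ge> 2"
      proof (rule ccontr)
        assume "\<not> length xs' \<ge> 2"
        then have "length xs' = Suc 0" using ne by (cases xs') (auto simp: Suc_le_eq)
        then obtain y where "xs' = [y]" by (auto simp: length_Suc_conv)
        then show False using sl nR by simp
      qed
      then show ?thesis by simp
    next
      case (Cons q ps') then show ?thesis using len2 by simp
    qed
    moreover have "distinct ?L" using p(2) ps(1) ends by auto
    moreover have "set ?L \<subseteq> VT" using ends ps(2) by auto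
    moreover have "successively ?E ?L"
    proof -
      have "ps = [] \<or> ?E (last (a # xs')) (hd ps)" using chb sl(2) by (cases ps) auto
      then show ?thesis using sE chps successively_append_iff by blast
    qed
    moreover have "{last ?L, hd ?L} \<in> ET"
    proof (cases ps)
      case Nil then show ?thesis using clos sl(2) by (simp add: insert_commute)
    next
      case (Cons q ps') then show ?thesis using clos by simp
    qed
    ultimately show False using no_cycle has_cycleI by blast
  qed
qed

lemma successively_rtranclp: "successively R xs \<Longrightarrow> xs \<noteq> [] \<Longrightarrow> R\<^sup>*\<^sup>* (hd xs) (last xs)"
proof (induction xs)
  case Nil then show ?case by simp
next
  case (Cons x xs)
  show ?case
  proof (cases xs)
    case Nil then show ?thesis by simp
  next
    case (Cons y ys)
    then have "R x y" "successively R xs" using Cons.prems(1) by auto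
    then have "R\<^sup>*\<^sup>* y (last xs)" using Cons.IH Cons by simp
    then show ?thesis using \<open>R x y\<close> Cons by (simp add: converse_rtranclp_into_rtranclp)
  qed
qed

definition cycle_list :: "('b \<Rightarrow> 'b \<Rightarrow> bool) \<Rightarrow> 'b list \<Rightarrow> bool" where
  "cycle_list P L \<longleftrightarrow> length L \<ge> 3 \<and> distinct L \<and> successively P L \<and> P (last L) (hd L)"

lemma cycle_list_rotate1: "cycle_list P L \<Longrightarrow> cycle_list P (rotate1 L)"
proof -
  assume c: "cycle_list P L"
  then obtain x xs where L: "L = x # xs" unfolding cycle_list_def by (cases L) auto
  have xs: "xs \<noteq> []" using c L unfolding cycle_list_def by auto
  have s: "successively P (x # xs)" "P (last (x # xs)) (hd (x # xs))" using c L unfolding cycle_list_def by auto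
  have s1: "successively P xs" using s(1) by (cases xs) auto
  have s2: "P x (hd xs)" using s(1) xs by (cases xs) auto
  have "successively P (xs @ [x])" using s1 s(2) xs by (simp add: successively_append_iff)
  moreover have "P (last (xs @ [x])) (hd (xs @ [x]))" using s2 xs by simp
  ultimately show "cycle_list P (rotate1 L)" using c L unfolding cycle_list_def by auto
qed

lemma cycle_list_rotate: "cycle_list P L \<Longrightarrow> cycle_list P (rotate n L)"
  by (induction n) (auto intro: cycle_list_rotate1)

lemma has_cycle_cycle_list:
  assumes "has_cycle VT ET"
  shows "\<exists>L. cycle_list (\<lambda>x y. {x,y} \<in> ET) L \<and> set L \<subseteq> VT"
proof -
  obtain xs where xs: "length xs \<ge> 3" "distinct xs" "set xs \<subseteq> VT"
    "\<forall>i < length xs - 1. {xs ! i, xs ! Suc i} \<in> ET" "{last xs, hd xs} \<in> ET"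
    using assms unfolding has_cycle_def by blast
  have "successively (\<lambda>x y. {x,y} \<in> ET) xs" unfolding successively_conv_nth using xs(4) by auto
  then show ?thesis using xs unfolding cycle_list_def by blast
qed

lemma card_le_2_pigeonhole:
  assumes "finite S" "card S \<le> 2" "x \<in> S" "y \<in> S" "z \<in> S"
  shows "x = y \<or> x = z \<or> y = z"
proof (rule ccontr)
  assume "\<not> (x = y \<or> x = z \<or> y = z)"
  then have "card {x,y,z} = 3" by simp
  moreover have "card {x,y,z} \<le> card S" using assms by (intro card_mono) auto
  ultimately show False using assms(2) by simp
qed

lemma card_le_2_if_no_three_distinct:
  assumes "finite S" "\<And>x y z. x \<in> S \<Longrightarrow> y \<in> S \<Longrightarrow> z \<in> S \<Longrightarrow> x \<noteq> y \<Longrightarrow> x \<noteq> z \<Longrightarrow> y \<noteq> z \<Longrightarrow> False"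
  shows "card S \<le> 2"
proof (rule ccontr)
  assume "\<not> card S \<le> 2"
  then obtain T where "T \<subseteq> S" "card T = 3" using obtain_subset_with_card_n[of 3 S] by auto
  then obtain x y z where "T = {x,y,z}" "x \<noteq> y" "y \<noteq> z" "x \<noteq> z" by (auto simp: card_3_iff)
  then show False using assms(2)[of x y z] \<open>T \<subseteq> S\<close> by auto
qed

lemma card_le_3_if_triples_contain:
  assumes fin: "finite X"
    and triples: "\<And>x1 x2 x3. x1 \<in> X \<Longrightarrow> x2 \<in> X \<Longrightarrow> x3 \<in> X \<Longrightarrow> x1 \<noteq> x2 \<Longrightarrow> x1 \<noteq> x3 \<Longrightarrow> x2 \<noteq> x3
       \<Longrightarrow> p \<in> {x1,x2,x3} \<and> q \<in> {x1,x2,x3} \<and> p \<noteq> q"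
  shows "card X \<le> (if p \<in> X \<and> q \<in> X \<and> p \<noteq> q then 3 else 2)"
proof (cases "card X \<ge> 3")
  case False then show ?thesis by simp
next
  case True
  then obtain T where "T \<subseteq> X" "card T = 3" using obtain_subset_with_card_n[of 3 X] by auto
  then obtain x1 x2 x3 where T: "T = {x1,x2,x3}" "x1 \<noteq> x2" "x2 \<noteq> x3" "x1 \<noteq> x3" by (auto simp: card_3_iff)
  have pq: "p \<in> X" "q \<in> X" "p \<noteq> q" using triples[of x1 x2 x3] T \<open>T \<subseteq> X\<close> by auto
  have "card (X - {p,q}) \<le> 1"
  proof (rule ccontr)
    assume "\<not> card (X - {p,q}) \<le> 1"
    then obtain y1 y2 where y: "y1 \<in> X - {p,q}" "y2 \<in> X - {p,q}" "y1 \<noteq> y2"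
      by (metis card_le_Suc0_iff_eq One_nat_def finite_Diff fin)
    show False using triples[of y1 y2 q] y pq by auto
  qed
  moreover have "card (X - {p,q}) = card X - 2" using pq fin by (simp add: card_Diff_subset)
  ultimately show ?thesis using pq by simp
qed

lemma sum_card_incidences_swap:
  assumes "finite A" "finite S"
  shows "(\<Sum>C\<in>A. card {s\<in>S. R C s}) = (\<Sum>s\<in>S. card {C\<in>A. R C s})"
  using sum_multicount_gen[OF assms, of R "\<lambda>s. card {C\<in>A. R C s}"] by simp

lemma card_le_sum_card_incidences:
  assumes "finite S" "\<And>C. C \<in> A \<Longrightarrow> \<exists>s\<in>S. R C s"
  shows "card A \<le> (\<Sum>C\<in>A. card {s\<in>S. R C s})"
proof -
  have "1 \<le> card {s\<in>S. R C s}" if C: "C \<in> A" for C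
  proof -
    obtain s where "s \<in> S" "R C s" using assms(2)[OF C] by blast
    then have "{s\<in>S. R C s} \<noteq> {}" by blast
    then show ?thesis using assms(1) by (simp add: Suc_le_eq card_gt_0_iff)
  qed
  then show ?thesis using sum_mono[of A "\<lambda>_. 1::nat"] by fastforce
qed

lemma incidences_unique_shared_separator:
  fixes R :: "'c \<Rightarrow> 's \<Rightarrow> bool"
  assumes fin: "finite A" "finite S" and ab: "a \<in> A" "b \<in> A"
    and cover: "\<And>C. C \<in> A \<Longrightarrow> \<exists>s\<in>S. R C s"
    and bound: "\<And>s. s \<in> S \<Longrightarrow> card {C\<in>A. R C s} \<le> (if R a s \<and> R b s \<and> a \<noteq> b then 3 else 2)"
    and many: "2 * card S < card A"
  obtains s0 where "a \<noteq> b" "s0 \<in> S" "{s\<in>S. R a s} = {s0}" "{s\<in>S. R b s} = {s0}"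
    "3 \<le> card {C\<in>A. R C s0}"
proof -
  define att where "att C = {s\<in>S. R C s}" for C
  define K where "K = att a \<inter> att b"
  have fin_att: "finite (att C)" for C using fin(2) unfolding att_def by simp
  have att_ne: "att C \<noteq> {}" if "C \<in> A" for C using cover[OF that] unfolding att_def by blast
  have count: "card A \<le> (\<Sum>s\<in>S. card {C\<in>A. R C s})"
    using card_le_sum_card_incidences[of S A R] fin cover sum_card_incidences_swap[OF fin] by simp
  have ne: "a \<noteq> b"
  proof
    assume "a = b"
    then have "(\<Sum>s\<in>S. card {C\<in>A. R C s}) \<le> (\<Sum>s\<in>S. 2)" using bound by (intro sum_mono) auto
    then show False using count many by simp
  qed
  have "(\<Sum>s\<in>S. card {C\<in>A. R C s}) \<le> (\<Sum>s\<in>S. 2 + (if s \<in> K then 1 else 0))"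
  proof (rule sum_mono)
    fix s assume "s \<in> S"
    then show "card {C\<in>A. R C s} \<le> 2 + (if s \<in> K then 1 else 0)"
      using bound[of s] ne unfolding K_def att_def by (auto split: if_splits)
  qed
  also have "\<dots> = 2 * card S + card {s\<in>S. s \<in> K}"
    using fin(2) sum.inter_filter[of S "\<lambda>_. 1::nat" "\<lambda>s. s \<in> K"]
    by (simp only: sum.distrib sum_constant) simp
  also have "{s\<in>S. s \<in> K} = K" unfolding K_def att_def by blast
  finally have upper: "(\<Sum>s\<in>S. card {C\<in>A. R C s}) \<le> 2 * card S + card K" .
  have "card (A - {a, b}) + card (att a) + card (att b) \<le> (\<Sum>C\<in>A. card (att C))"
  proof -
    have "card (A - {a, b}) \<le> (\<Sum>C\<in>A - {a, b}. card (att C))"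
      using card_le_sum_card_incidences[OF fin(2), of "A - {a, b}" R] cover unfolding att_def by blast
    moreover have "(\<Sum>C\<in>A. card (att C)) = (\<Sum>C\<in>A - {a, b}. card (att C)) + card (att a) + card (att b)"
      using fin(1) ab ne by (simp add: sum.remove[of A a] sum.remove[of "A - {a}" b] insert_Diff_if Diff_insert2[symmetric])
    ultimately show ?thesis by linarith
  qed
  moreover have "card (A - {a, b}) = card A - 2" using ab ne fin(1) by (simp add: card_Diff_subset)
  moreover have "(\<Sum>C\<in>A. card (att C)) = (\<Sum>s\<in>S. card {C\<in>A. R C s})"
    unfolding att_def by (rule sum_card_incidences_swap[OF fin])
  moreover have "card (att a) + card (att b) = card (att a \<union> att b) + card K"
    unfolding K_def by (rule card_Un_Int[OF fin_att fin_att])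
  ultimately have "card (att a \<union> att b) \<le> 1" using upper many by linarith
  moreover obtain s0 where "s0 \<in> att a" using att_ne[OF ab(1)] by blast
  moreover obtain s1 where "s1 \<in> att b" using att_ne[OF ab(2)] by blast
  ultimately have "\<forall>x\<in>att a \<union> att b. x = s0"
    using card_le_Suc0_iff_eq[of "att a \<union> att b"] fin_att by simp
  with \<open>s0 \<in> att a\<close> \<open>s1 \<in> att b\<close> have s0: "att a = {s0}" "att b = {s0}" by auto
  have s0S: "s0 \<in> S" using s0 unfolding att_def by blast
  have other: "card {C\<in>A. R C s} \<le> 2" if "s \<in> S - {s0}" for s
    using bound[of s] that s0 unfolding att_def by (auto split: if_splits)
  have "(\<Sum>s\<in>S. card {C\<in>A. R C s}) = card {C\<in>A. R C s0} + (\<Sum>s\<in>S - {s0}. card {C\<in>A. R C s})"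
    using fin(2) s0S by (simp add: sum.remove)
  also have "\<dots> \<le> card {C\<in>A. R C s0} + (\<Sum>s\<in>S - {s0}. 2)"
    using other by (intro add_left_mono sum_mono) blast
  also have "\<dots> = card {C\<in>A. R C s0} + 2 * (card S - 1)"
    using fin(2) s0S by simp
  finally have "3 \<le> card {C\<in>A. R C s0}"
    using count many card_gt_0_iff[of S] fin(2) s0S by fastforce
  then show ?thesis using that ne s0S s0 unfolding att_def by blast
qed

section \<open>Toughness and claw-freeness\<close>

lemma claw_free_adjacent_components_le_2:
  assumes fin: "finite V" and cf: "claw_free V E" and S: "S \<subseteq> V" and s: "s \<in> S"
  shows "card {C \<in> component (V - S) E ` (V - S). \<exists>c\<in>C. {c, s} \<in> E} \<le> 2"
proof (rule card_le_2_if_no_three_distinct)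
  let ?A = "component (V - S) E ` (V - S)"
  show "finite {C \<in> ?A. \<exists>c\<in>C. {c, s} \<in> E}" using fin by simp
  fix C1 C2 C3 assume H: "C1 \<in> {C \<in> ?A. \<exists>c\<in>C. {c, s} \<in> E}" "C2 \<in> {C \<in> ?A. \<exists>c\<in>C. {c, s} \<in> E}"
    "C3 \<in> {C \<in> ?A. \<exists>c\<in>C. {c, s} \<in> E}" "C1 \<noteq> C2" "C1 \<noteq> C3" "C2 \<noteq> C3"
  then obtain c1 c2 c3 where c: "c1 \<in> C1" "{c1, s} \<in> E" "c2 \<in> C2" "{c2, s} \<in> E" "c3 \<in> C3" "{c3, s} \<in> E"
    by blast
  have A: "C1 \<in> ?A" "C2 \<in> ?A" "C3 \<in> ?A" using H by auto
  have d12: "\<not> reach (V - S) E c1 c2 \<and> c1 \<noteq> c2" by (rule distinct_components_not_reach[OF A(1,2) H(4) c(1) c(3)])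
  have d13: "\<not> reach (V - S) E c1 c3 \<and> c1 \<noteq> c3" by (rule distinct_components_not_reach[OF A(1,3) H(5) c(1) c(5)])
  have d23: "\<not> reach (V - S) E c2 c3 \<and> c2 \<noteq> c3" by (rule distinct_components_not_reach[OF A(2,3) H(6) c(3) c(5)])
  have inU: "c1 \<in> V - S" "c2 \<in> V - S" "c3 \<in> V - S"
    using c A by (auto dest: component_of_mem simp: mem_component)
  have n12: "{c1, c2} \<notin> E" using d12 inU reach_edge by metis
  have n13: "{c1, c3} \<notin> E" using d13 inU reach_edge by metis
  have n23: "{c2, c3} \<notin> E" using d23 inU reach_edge by metis
  have "distinct [s, c1, c2, c3]" using d12 d13 d23 inU s by auto
  moreover have "{s, c1} \<in> E" "{s, c2} \<in> E" "{s, c3} \<in> E" using c by (auto simp: insert_commute)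
  moreover have "s \<in> V" "c1 \<in> V" "c2 \<in> V" "c3 \<in> V" using s S inU by auto
  ultimately show False using cf n12 n13 n23 unfolding claw_free_def by blast
qed

lemma claw_free_num_comp_le:
  assumes fin: "finite V" and cf: "claw_free V E" and conn: "\<forall>x\<in>V. \<forall>y\<in>V. reach V E x y"
    and S: "S \<subseteq> V" "S \<noteq> {}"
  shows "num_comp (V - S) E \<le> 2 * card S"
proof -
  let ?A = "component (V - S) E ` (V - S)"
  let ?R = "\<lambda>C s. \<exists>c\<in>C. {c, s} \<in> E"
  have finA: "finite ?A" using fin by simp
  have finS: "finite S" using fin S finite_subset by blast
  have "card ?A = (\<Sum>C\<in>?A. 1)" by simp
  also have "\<dots> \<le> (\<Sum>C\<in>?A. card {s\<in>S. ?R C s})"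
  proof (rule sum_mono)
    fix C assume "C \<in> ?A"
    then obtain c s where "c \<in> C" "s \<in> S" "{c,s} \<in> E" using component_adjacent_to_cutset[OF conn S] by blast
    then have "{s\<in>S. ?R C s} \<noteq> {}" by blast
    moreover have "finite {s\<in>S. ?R C s}" using finS by simp
    ultimately show "1 \<le> card {s\<in>S. ?R C s}" by (simp add: Suc_leI card_gt_0_iff)
  qed
  also have "\<dots> = (\<Sum>s\<in>S. card {C\<in>?A. ?R C s})" by (rule sum_card_incidences_swap[OF finA finS])
  also have "\<dots> \<le> (\<Sum>s\<in>S. 2)"
  proof (rule sum_mono)
    fix s assume "s \<in> S"
    show "card {C\<in>?A. ?R C s} \<le> 2" by (rule claw_free_adjacent_components_le_2[OF fin cf S(1) \<open>s \<in> S\<close>])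
  qed
  also have "\<dots> = 2 * card S" by simp
  finally show ?thesis unfolding num_comp_eq_card_components .
qed

lemma finite_cut_ratios:
  assumes "finite V"
  shows "finite {real (card S) / real (num_comp (V - S) E) | S. cutset V E S}"
proof -
  have "{real (card S) / real (num_comp (V - S) E) | S. cutset V E S}
      \<subseteq> (\<lambda>S. real (card S) / real (num_comp (V - S) E)) ` Pow V"
    unfolding cutset_def by blast
  then show ?thesis using assms by (meson finite_Pow_iff finite_imageI finite_subset)
qed

lemma toughness_le_cut_ratio:
  assumes "finite V" "cutset V E S"
  shows "toughness V E \<le> ereal (real (card S) / real (num_comp (V - S) E))"
proof -
  have "Min {real (card S) / real (num_comp (V - S) E) | S. cutset V E S} \<le> real (card S) / real (num_comp (V - S) E)"
    using assms finite_cut_ratios[OF assms(1), of E] by (intro Min_le) auto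
  then show ?thesis unfolding toughness_def using assms(2) by auto
qed

lemma toughness_eqI:
  assumes "finite V" "cutset V E S0" "real (card S0) / real (num_comp (V - S0) E) \<le> r"
    "\<And>S. cutset V E S \<Longrightarrow> r \<le> real (card S) / real (num_comp (V - S) E)"
  shows "toughness V E = ereal r"
proof -
  let ?M = "{real (card S) / real (num_comp (V - S) E) | S. cutset V E S}"
  have fin: "finite ?M" by (rule finite_cut_ratios[OF assms(1)])
  have ne: "?M \<noteq> {}" using assms(2) by blast
  have "Min ?M \<le> r" using Min_le[OF fin, of "real (card S0) / real (num_comp (V - S0) E)"] assms(2,3) by fastforce
  moreover have "r \<le> Min ?M" using fin ne assms(4) by (subst Min_ge_iff) auto
  ultimately have "Min ?M = r" by simp
  then show ?thesis unfolding toughness_def using assms(2) by auto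
qed

lemma toughness_less_cutset:
  assumes "finite V" "toughness V E < ereal t"
  shows "\<exists>S. cutset V E S \<and> real (card S) / real (num_comp (V - S) E) < t"
proof -
  let ?M = "{real (card S) / real (num_comp (V - S) E) | S. cutset V E S}"
  have ex: "\<exists>S. cutset V E S" using assms(2) unfolding toughness_def by (cases "\<exists>S. cutset V E S") auto
  then have "toughness V E = ereal (Min ?M)" unfolding toughness_def by simp
  then have lt: "Min ?M < t" using assms(2) by simp
  have "Min ?M \<in> ?M" using finite_cut_ratios[OF assms(1)] ex by (intro Min_in) auto
  then show ?thesis using lt by auto
qed

lemma toughness_finite_cutset:
  assumes "toughness V E = ereal t"
  shows "\<exists>S. cutset V E S"
  using assms unfolding toughness_def by (cases "\<exists>S. cutset V E S") auto

section \<open>Invariance under injective relabelling\<close>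

definition edges_in :: "'a set \<Rightarrow> 'a set set \<Rightarrow> bool" where
  "edges_in V E \<longleftrightarrow> (\<forall>e\<in>E. e \<subseteq> V)"

lemma graph_edges_in: "graph V E \<Longrightarrow> edges_in V E"
  unfolding graph_def edges_in_def by blast

lemma image_edge_iff:
  assumes "inj_on h V" "edges_in V E" "x \<in> V" "y \<in> V"
  shows "{h x, h y} \<in> (`) h ` E \<longleftrightarrow> {x, y} \<in> E"
proof
  assume "{h x, h y} \<in> (`) h ` E"
  then obtain e where e: "e \<in> E" "h ` e = {h x, h y}" by auto
  have "e \<subseteq> V" using e(1) assms(2) unfolding edges_in_def by blast
  moreover have "{x,y} \<subseteq> V" using assms by auto
  moreover have "h ` e = h ` {x,y}" using e(2) by simp
  ultimately have "e = {x,y}" using inj_on_image_eq_iff[OF assms(1)] by blast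
  then show "{x,y} \<in> E" using e(1) by simp
next
  assume "{x,y} \<in> E"
  then have "h ` {x,y} \<in> (`) h ` E" by (rule imageI)
  then show "{h x, h y} \<in> (`) h ` E" by simp
qed

lemma reach_image:
  assumes "reach U E x y" "U \<subseteq> V" "inj_on h V" "edges_in V E"
  shows "reach (h ` U) ((`) h ` E) (h x) (h y)"
  using assms(1)
proof (induction rule: reach_induct)
  case base then show ?case by simp
next
  case (step y z)
  have "h ` {y, z} \<in> (`) h ` E" using \<open>{y,z} \<in> E\<close> by (rule imageI)
  then have "{h y, h z} \<in> (`) h ` E" by simp
  moreover have "h y \<in> h ` U" "h z \<in> h ` U" using step by auto
  ultimately show ?case using \<open>reach (h ` U) ((`) h ` E) (h x) (h y)\<close> reach_step by metis
qed

lemma reach_image_obtain: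
  assumes "reach (h ` U) ((`) h ` E) a b" "U \<subseteq> V" "inj_on h V" "edges_in V E" "a = h x" "x \<in> U"
  shows "\<exists>y\<in>U. b = h y \<and> reach U E x y"
  using assms(1)
proof (induction rule: reach_induct)
  case base then show ?case using assms by auto
next
  case (step b c)
  then obtain y where y: "y \<in> U" "b = h y" "reach U E x y" by blast
  from \<open>c \<in> h ` U\<close> obtain z where z: "z \<in> U" "c = h z" by blast
  have "{h y, h z} \<in> (`) h ` E" using \<open>{b, c} \<in> _\<close> y z by simp
  then have "{y, z} \<in> E" using image_edge_iff[OF assms(3,4), of y z] y(1) z(1) assms(2) by blast
  then have "reach U E x z" using reach_step[OF y(3) y(1) z(1)] by blast
  then show ?case using z by blast
qed

lemma reach_image_iff:
  assumes "U \<subseteq> V" "inj_on h V" "edges_in V E" "x \<in> U" "y \<in> U"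
  shows "reach (h ` U) ((`) h ` E) (h x) (h y) \<longleftrightarrow> reach U E x y"
proof
  assume "reach (h ` U) ((`) h ` E) (h x) (h y)"
  from reach_image_obtain[OF this assms(1-3) refl assms(4)] obtain y' where
    "y' \<in> U" "h y = h y'" "reach U E x y'" by blast
  moreover have "y' = y"
    using inj_onD[OF assms(2) \<open>h y = h y'\<close>[symmetric]] assms(1,5) \<open>y' \<in> U\<close> by blast
  ultimately show "reach U E x y" by (metis (no_types))
next
  assume "reach U E x y"
  then show "reach (h ` U) ((`) h ` E) (h x) (h y)" by (rule reach_image[OF _ assms(1-3)])
qed

lemma component_image:
  assumes "U \<subseteq> V" "inj_on h V" "edges_in V E" "x \<in> U"
  shows "component (h ` U) ((`) h ` E) (h x) = h ` component U E x"
proof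
  show "component (h ` U) ((`) h ` E) (h x) \<subseteq> h ` component U E x"
  proof
    fix b assume "b \<in> component (h ` U) ((`) h ` E) (h x)"
    then have "b \<in> h ` U" "reach (h ` U) ((`) h ` E) (h x) b" unfolding component_def by auto
    then obtain y where "y \<in> U" "b = h y" by auto
    then show "b \<in> h ` component U E x"
      using reach_image_iff[OF assms(1-4) \<open>y \<in> U\<close>] \<open>reach _ _ _ b\<close> unfolding component_def by auto
  qed
next
  show "h ` component U E x \<subseteq> component (h ` U) ((`) h ` E) (h x)"
  proof
    fix b assume "b \<in> h ` component U E x"
    then obtain y where "y \<in> U" "b = h y" "reach U E x y" unfolding component_def by auto
    then show "b \<in> component (h ` U) ((`) h ` E) (h x)"
      using reach_image_iff[OF assms(1-4) \<open>y \<in> U\<close>] unfolding component_def by auto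
  qed
qed

lemma num_comp_image:
  assumes "U \<subseteq> V" "inj_on h V" "edges_in V E"
  shows "num_comp (h ` U) ((`) h ` E) = num_comp U E"
proof -
  have "component (h ` U) ((`) h ` E) ` (h ` U) = (\<lambda>x. h ` component U E x) ` U"
    unfolding image_image using component_image[OF assms] by (intro image_cong) auto
  also have "\<dots> = (`) h ` (component U E ` U)" by (simp add: image_image)
  finally have eq: "component (h ` U) ((`) h ` E) ` (h ` U) = (`) h ` (component U E ` U)" .
  have inj: "inj_on ((`) h) (component U E ` U)"
  proof (rule inj_onI)
    fix A B assume A: "A \<in> component U E ` U" and B: "B \<in> component U E ` U" and AB: "h ` A = h ` B"
    have "A \<subseteq> V" using A component_subset assms(1) by fastforce
    moreover have "B \<subseteq> V" using B component_subset assms(1) by fastforce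
    ultimately show "A = B" using inj_on_image_eq_iff[OF assms(2)] AB by metis
  qed
  show ?thesis unfolding num_comp_eq_card_components eq using card_image[OF inj] by simp
qed

lemma cutset_image:
  assumes "inj_on h V" "edges_in V E" "S \<subseteq> V"
  shows "cutset (h ` V) ((`) h ` E) (h ` S) \<longleftrightarrow> cutset V E S"
proof -
  have "h ` V - h ` S = h ` (V - S)" using assms inj_on_image_set_diff by blast
  then show ?thesis unfolding cutset_def using num_comp_image[OF _ assms(1,2), of "V - S"] assms(3) by auto
qed

lemma inj_on_image_diff: "inj_on h V \<Longrightarrow> S \<subseteq> V \<Longrightarrow> h ` V - h ` S = h ` (V - S)"
  using inj_on_image_set_diff by blast

lemma cut_ratios_image:
  assumes "inj_on h V" "edges_in V E"
  shows "{real (card S) / real (num_comp (h ` V - S) ((`) h ` E)) | S. cutset (h ` V) ((`) h ` E) S}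
       = {real (card S) / real (num_comp (V - S) E) | S. cutset V E S}"
proof (intro set_eqI iffI)
  fix r assume "r \<in> {real (card S) / real (num_comp (h ` V - S) ((`) h ` E)) | S. cutset (h ` V) ((`) h ` E) S}"
  then obtain S' where S': "r = real (card S') / real (num_comp (h ` V - S') ((`) h ` E))"
    "cutset (h ` V) ((`) h ` E) S'" by blast
  then have "S' \<subseteq> h ` V" unfolding cutset_def by blast
  then obtain S where S: "S \<subseteq> V" "S' = h ` S" by (meson subset_image_iff)
  have "card S' = card S" using S assms(1) by (metis card_image inj_on_subset)
  moreover have "num_comp (h ` V - S') ((`) h ` E) = num_comp (V - S) E"
    using S inj_on_image_diff[OF assms(1) S(1)] num_comp_image[OF _ assms, of "V - S"] by auto
  moreover have "cutset V E S" using S' S cutset_image[OF assms S(1)] by simp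
  ultimately show "r \<in> {real (card S) / real (num_comp (V - S) E) | S. cutset V E S}" using S'(1) by auto
next
  fix r assume "r \<in> {real (card S) / real (num_comp (V - S) E) | S. cutset V E S}"
  then obtain S where S: "r = real (card S) / real (num_comp (V - S) E)" "cutset V E S" by blast
  then have "S \<subseteq> V" unfolding cutset_def by blast
  have "card (h ` S) = card S" using \<open>S \<subseteq> V\<close> assms(1) by (metis card_image inj_on_subset)
  moreover have "num_comp (h ` V - h ` S) ((`) h ` E) = num_comp (V - S) E"
    using inj_on_image_diff[OF assms(1) \<open>S \<subseteq> V\<close>] num_comp_image[OF _ assms, of "V - S"] by auto
  moreover have "cutset (h ` V) ((`) h ` E) (h ` S)" using S cutset_image[OF assms \<open>S \<subseteq> V\<close>] by simp
  ultimately show "r \<in> {real (card S) / real (num_comp (h ` V - S) ((`) h ` E)) | S. cutset (h ` V) ((`) h ` E) S}"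
    using S(1) by (metis (mono_tags, lifting) mem_Collect_eq)
qed

lemma ex_cutset_image:
  assumes "inj_on h V" "edges_in V E"
  shows "(\<exists>S. cutset (h ` V) ((`) h ` E) S) \<longleftrightarrow> (\<exists>S. cutset V E S)"
proof
  assume "\<exists>S. cutset (h ` V) ((`) h ` E) S"
  then obtain S' where S': "cutset (h ` V) ((`) h ` E) S'" by blast
  then have "S' \<subseteq> h ` V" unfolding cutset_def by blast
  then obtain S where S: "S \<subseteq> V" "S' = h ` S" by (meson subset_image_iff)
  then show "\<exists>S. cutset V E S" using S' cutset_image[OF assms S(1)] by blast
next
  assume "\<exists>S. cutset V E S"
  then obtain S where S: "cutset V E S" by blast
  then have "S \<subseteq> V" unfolding cutset_def by blast
  then show "\<exists>S. cutset (h ` V) ((`) h ` E) S" using S cutset_image[OF assms] by blast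
qed

lemma toughness_image:
  assumes "inj_on h V" "edges_in V E"
  shows "toughness (h ` V) ((`) h ` E) = toughness V E"
  unfolding toughness_def using cut_ratios_image[OF assms] ex_cutset_image[OF assms] by simp

lemma image_edges_remove:
  assumes "inj_on h V" "edges_in V E" "e \<in> E"
  shows "(`) h ` E - {h ` e} = (`) h ` (E - {e})"
proof -
  have "inj_on ((`) h) E"
  proof (rule inj_onI)
    fix A B assume "A \<in> E" "B \<in> E" "h ` A = h ` B"
    moreover have "A \<subseteq> V" "B \<subseteq> V" using \<open>A \<in> E\<close> \<open>B \<in> E\<close> assms(2) unfolding edges_in_def by blast+
    ultimately show "A = B" using inj_on_image_eq_iff[OF assms(1)] by blast
  qed
  then show ?thesis using assms(3) by (simp add: inj_on_image_set_diff)
qed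

lemma edges_in_Diff: "edges_in V E \<Longrightarrow> edges_in V (E - X)"
  unfolding edges_in_def by blast

lemma minimally_tough_image:
  assumes "inj_on h V" "edges_in V E"
  shows "minimally_tough t (h ` V) ((`) h ` E) \<longleftrightarrow> minimally_tough t V E"
proof -
  have "toughness (h ` V) ((`) h ` E - {e'}) = toughness V (E - {e})" if "e \<in> E" "e' = h ` e" for e e'
    using image_edges_remove[OF assms that(1)] toughness_image[OF assms(1) edges_in_Diff[OF assms(2)]] that(2)
    by simp
  then show ?thesis unfolding minimally_tough_def using toughness_image[OF assms] by auto
qed

lemma claw_free_preimage:
  assumes "inj_on h V" "edges_in V E" "claw_free (h ` V) ((`) h ` E)"
  shows "claw_free V E"
  unfolding claw_free_def
proof (intro notI, elim bexE conjE)
  fix c a b d assume H: "c \<in> V" "a \<in> V" "b \<in> V" "d \<in> V" "distinct [c, a, b, d]"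
    "{c, a} \<in> E" "{c, b} \<in> E" "{c, d} \<in> E" "{a, b} \<notin> E" "{a, d} \<notin> E" "{b, d} \<notin> E"
  have "distinct [h c, h a, h b, h d]" using H(1-5) assms(1) by (auto simp: inj_on_eq_iff)
  note ie = image_edge_iff[OF assms(1,2)]
  have "{h c, h a} \<in> (`) h ` E" "{h c, h b} \<in> (`) h ` E" "{h c, h d} \<in> (`) h ` E"
    using ie H by auto
  moreover have "{h a, h b} \<notin> (`) h ` E" "{h a, h d} \<notin> (`) h ` E" "{h b, h d} \<notin> (`) h ` E"
    using ie H by auto
  moreover have "h c \<in> h ` V" "h a \<in> h ` V" "h b \<in> h ` V" "h d \<in> h ` V" using H by auto
  ultimately have "\<exists>c\<in>h ` V. \<exists>a\<in>h ` V. \<exists>b\<in>h ` V. \<exists>d\<in>h ` V.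
      distinct [c, a, b, d] \<and> {c, a} \<in> (`) h ` E \<and> {c, b} \<in> (`) h ` E \<and> {c, d} \<in> (`) h ` E \<and>
      {a, b} \<notin> (`) h ` E \<and> {a, d} \<notin> (`) h ` E \<and> {b, d} \<notin> (`) h ` E"
    using \<open>distinct [h c, h a, h b, h d]\<close>
    apply -
    apply (rule bexI[of _ "h c"], rule bexI[of _ "h a"], rule bexI[of _ "h b"], rule bexI[of _ "h d"])
    by simp_all
  then show False using assms(3) unfolding claw_free_def by blast
qed

lemma graph_image:
  assumes "graph V E" "inj_on h V"
  shows "graph (h ` V) ((`) h ` E)"
  unfolding graph_def
proof (intro conjI ballI)
  show "finite (h ` V)" using assms(1) unfolding graph_def by simp
next
  fix e' assume "e' \<in> (`) h ` E"
  then obtain e where e: "e \<in> E" "e' = h ` e" by blast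
  then have "e \<subseteq> V" "card e = 2" using assms(1) unfolding graph_def by blast+
  then show "e' \<subseteq> h ` V" "card e' = 2" using e assms(2) by (auto simp: card_image inj_on_subset)
qed

lemma has_cycle_preimage:
  assumes hc: "has_cycle (h ` V) ((`) h ` E)" and inj: "inj_on h V" and ei: "edges_in V E"
  shows "has_cycle V E"
proof -
  obtain xs where xs: "length xs \<ge> 3" "distinct xs" "set xs \<subseteq> h ` V"
    "\<forall>i < length xs - 1. {xs ! i, xs ! Suc i} \<in> (`) h ` E" "{last xs, hd xs} \<in> (`) h ` E"
    using hc unfolding has_cycle_def by blast
  define g where "g = inv_into V h"
  define ys where "ys = map g xs"
  have hg: "h (g y) = y" if "y \<in> h ` V" for y using that unfolding g_def by (simp add: f_inv_into_f)
  have gV: "g y \<in> V" if "y \<in> h ` V" for y using that unfolding g_def by (simp add: inv_into_into)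
  have xs_eq: "xs = map h ys" unfolding ys_def using xs(3) hg by (induction xs) auto
  have ysV: "set ys \<subseteq> V" unfolding ys_def using xs(3) gV by auto
  have edge: "{a,b} \<in> E" if "{h a, h b} \<in> (`) h ` E" "a \<in> V" "b \<in> V" for a b
    using image_edge_iff[OF inj ei that(2,3)] that(1) by simp
  have "length ys \<ge> 3" using xs(1) unfolding ys_def by simp
  moreover have "distinct ys" using xs(2) xs_eq by (simp add: distinct_map)
  moreover have "\<forall>i < length ys - 1. {ys ! i, ys ! Suc i} \<in> E"
  proof (intro allI impI)
    fix i assume i: "i < length ys - 1"
    have "{h (ys ! i), h (ys ! Suc i)} \<in> (`) h ` E" using xs(4) i xs_eq by simp
    moreover have "ys ! i \<in> V" "ys ! Suc i \<in> V" using ysV i by (auto intro: nth_mem[THEN subsetD[OF ysV]])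
    ultimately show "{ys ! i, ys ! Suc i} \<in> E" using edge by blast
  qed
  moreover have "{last ys, hd ys} \<in> E"
  proof -
    have ne: "ys \<noteq> []" using \<open>length ys \<ge> 3\<close> by auto
    have "{h (last ys), h (hd ys)} \<in> (`) h ` E" using xs(5) xs_eq ne by (simp add: last_map hd_map)
    moreover have "last ys \<in> V" "hd ys \<in> V" using ysV ne by auto
    ultimately show ?thesis using edge by blast
  qed
  ultimately show ?thesis unfolding has_cycle_def using ysV by blast
qed

lemma nbrs_image:
  assumes inj: "inj_on h V" and ei: "edges_in V E" and v: "v \<in> V"
  shows "{u. {u, h v} \<in> (`) h ` E} = h ` {u. {u, v} \<in> E}"
proof
  show "{u. {u, h v} \<in> (`) h ` E} \<subseteq> h ` {u. {u, v} \<in> E}"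
  proof
    fix u assume "u \<in> {u. {u, h v} \<in> (`) h ` E}"
    then obtain e where e: "e \<in> E" "{u, h v} = h ` e" by auto
    then have "e \<subseteq> V" using ei unfolding edges_in_def by blast
    then have "u \<in> h ` V" using e by blast
    then obtain w where w: "w \<in> V" "u = h w" by blast
    then have "{w,v} \<in> E" using image_edge_iff[OF inj ei w(1) v] e by auto
    then show "u \<in> h ` {u. {u, v} \<in> E}" using w by blast
  qed
next
  show "h ` {u. {u, v} \<in> E} \<subseteq> {u. {u, h v} \<in> (`) h ` E}"
  proof
    fix u assume "u \<in> h ` {u. {u, v} \<in> E}"
    then obtain w where w: "{w,v} \<in> E" "u = h w" by blast
    then have "h ` {w,v} \<in> (`) h ` E" by blast
    then show "u \<in> {u. {u, h v} \<in> (`) h ` E}" using w by simp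
  qed
qed

lemma degree_image:
  assumes inj: "inj_on h V" and ei: "edges_in V E" and v: "v \<in> V"
  shows "degree ((`) h ` E) (h v) = degree E v"
proof -
  have "{u. {u, v} \<in> E} \<subseteq> V" using ei unfolding edges_in_def by blast
  then have "inj_on h {u. {u, v} \<in> E}" using inj inj_on_subset by blast
  then show ?thesis unfolding degree_def nbrs_image[OF assms] by (simp add: card_image)
qed

lemma tree_image:
  assumes t: "tree V E" and inj: "inj_on h V"
  shows "tree (h ` V) ((`) h ` E)"
proof -
  have g: "graph V E" using t unfolding tree_def by blast
  have ei: "edges_in V E" using graph_edges_in[OF g] .
  have "connected_graph (h ` V) ((`) h ` E)"
    using t num_comp_image[OF subset_refl inj ei] unfolding tree_def connected_graph_def by simp
  moreover have "\<not> has_cycle (h ` V) ((`) h ` E)" using t has_cycle_preimage[OF _ inj ei] unfolding tree_def by blast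
  ultimately show ?thesis using graph_image[OF g inj] unfolding tree_def by blast
qed

lemma leaf_or_deg3_image:
  assumes inj: "inj_on h V" and ei: "edges_in V E"
  shows "{v \<in> h ` V. degree ((`) h ` E) v = 1 \<or> degree ((`) h ` E) v = 3}
       = h ` {v \<in> V. degree E v = 1 \<or> degree E v = 3}"
  using degree_image[OF inj ei] by auto

lemma independent_image:
  assumes inj: "inj_on h V" and ei: "edges_in V E" and I: "I \<subseteq> V" and ind: "independent E I"
  shows "independent ((`) h ` E) (h ` I)"
  unfolding independent_def
proof (intro ballI notI)
  fix x y assume "x \<in> h ` I" "y \<in> h ` I" "{x,y} \<in> (`) h ` E"
  then obtain a b where ab: "a \<in> I" "b \<in> I" "x = h a" "y = h b" by blast
  then have "{a,b} \<in> E" using image_edge_iff[OF inj ei] I \<open>{x,y} \<in> _\<close> by blast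
  then show False using ind ab unfolding independent_def by blast
qed

lemma deg3_image:
  assumes inj: "inj_on h V" and ei: "edges_in V E"
  shows "deg3 (h ` V) ((`) h ` E) = h ` deg3 V E"
  unfolding deg3_def using degree_image[OF inj ei] by auto

lemma construct_V_image:
  assumes inj: "inj_on h V" and ei: "edges_in V E"
  shows "construct_V (h ` V) ((`) h ` E) = h ` construct_V V E"
proof -
  have "deg3 V E \<subseteq> V" unfolding deg3_def by blast
  then show ?thesis unfolding construct_V_def deg3_image[OF assms]
    using inj by (simp add: inj_on_image_set_diff)
qed

lemma construct_E_image_subset:
  assumes inj: "inj_on h V" and ei: "edges_in V E"
  shows "construct_E (h ` V) ((`) h ` E) \<subseteq> (`) h ` construct_E V E"
proof -
  have DV: "deg3 V E \<subseteq> V" unfolding deg3_def by blast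
  note ie = image_edge_iff[OF inj ei]
  have eV: "e \<subseteq> V" if "e \<in> E" for e using that ei unfolding edges_in_def by blast
  show ?thesis
  proof
    fix e' assume e': "e' \<in> construct_E (h ` V) ((`) h ` E)"
    have "(e' \<in> (`) h ` E \<and> e' \<inter> h ` deg3 V E = {}) \<or>
      (\<exists>x y. e' = {x,y} \<and> x \<noteq> y \<and> (\<exists>w\<in>h ` deg3 V E. {x,w} \<in> (`) h ` E \<and> {y,w} \<in> (`) h ` E))"
      using e' unfolding construct_E_def deg3_image[OF inj ei] by blast
    then show "e' \<in> (`) h ` construct_E V E"
    proof
      assume h1: "e' \<in> (`) h ` E \<and> e' \<inter> h ` deg3 V E = {}"
      then obtain e where e: "e \<in> E" "e' = h ` e" by blast
      have "e \<inter> deg3 V E = {}"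
      proof (rule ccontr)
        assume "e \<inter> deg3 V E \<noteq> {}"
        then obtain z where "z \<in> e" "z \<in> deg3 V E" by blast
        then have "h z \<in> e' \<inter> h ` deg3 V E" using e by blast
        then show False using h1 by blast
      qed
      then have "e \<in> construct_E V E" using e unfolding construct_E_def by blast
      then show ?thesis using e by blast
    next
      assume "\<exists>x y. e' = {x,y} \<and> x \<noteq> y \<and> (\<exists>w\<in>h ` deg3 V E. {x,w} \<in> (`) h ` E \<and> {y,w} \<in> (`) h ` E)"
      then obtain x y w where h2: "e' = {x,y}" "x \<noteq> y" "w \<in> deg3 V E" "{x, h w} \<in> (`) h ` E" "{y, h w} \<in> (`) h ` E"
        by blast
      have inV: "x \<in> h ` V" "y \<in> h ` V"
      proof -
        obtain e1 where "e1 \<in> E" "{x, h w} = h ` e1" using h2(4) by blast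
        then show "x \<in> h ` V" using eV by blast
        obtain e2 where "e2 \<in> E" "{y, h w} = h ` e2" using h2(5) by blast
        then show "y \<in> h ` V" using eV by blast
      qed
      then obtain a b where ab: "a \<in> V" "b \<in> V" "x = h a" "y = h b" by blast
      have wV: "w \<in> V" using h2(3) DV by blast
      have "{a,w} \<in> E" "{b,w} \<in> E" using ie[OF ab(1) wV] ie[OF ab(2) wV] h2 ab by auto
      moreover have "a \<noteq> b" using h2(2) ab by blast
      ultimately have "{a,b} \<in> construct_E V E" using h2(3) unfolding construct_E_def by blast
      moreover have "e' = h ` {a,b}" using h2(1) ab by simp
      ultimately show ?thesis by blast
    qed
  qed
qed

lemma image_construct_E_subset:
  assumes inj: "inj_on h V" and ei: "edges_in V E"
  shows "(`) h ` construct_E V E \<subseteq> construct_E (h ` V) ((`) h ` E)"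
proof -
  have DV: "deg3 V E \<subseteq> V" unfolding deg3_def by blast
  note ie = image_edge_iff[OF inj ei]
  have eV: "e \<subseteq> V" if "e \<in> E" for e using that ei unfolding edges_in_def by blast
  show ?thesis
  proof
    fix e' assume "e' \<in> (`) h ` construct_E V E"
    then obtain e where e: "e \<in> construct_E V E" "e' = h ` e" by blast
    have "(e \<in> E \<and> e \<inter> deg3 V E = {}) \<or>
      (\<exists>x y. e = {x,y} \<and> x \<noteq> y \<and> (\<exists>w\<in>deg3 V E. {x,w} \<in> E \<and> {y,w} \<in> E))"
      using e(1) unfolding construct_E_def by blast
    then show "e' \<in> construct_E (h ` V) ((`) h ` E)"
    proof
      assume h1: "e \<in> E \<and> e \<inter> deg3 V E = {}"
      have "h ` e \<inter> h ` deg3 V E = {}"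
        using h1 eV[of e] DV inj by (metis image_Int image_empty inj_on_subset le_sup_iff Un_absorb2 Un_commute inj_on_image_Int)
      then show ?thesis using h1 e(2) unfolding construct_E_def deg3_image[OF inj ei] by blast
    next
      assume "\<exists>x y. e = {x,y} \<and> x \<noteq> y \<and> (\<exists>w\<in>deg3 V E. {x,w} \<in> E \<and> {y,w} \<in> E)"
      then obtain x y w where h2: "e = {x,y}" "x \<noteq> y" "w \<in> deg3 V E" "{x,w} \<in> E" "{y,w} \<in> E" by blast
      have V: "x \<in> V" "y \<in> V" "w \<in> V" using eV h2 by blast+
      have "{h x, h w} \<in> (`) h ` E" "{h y, h w} \<in> (`) h ` E" using ie V h2 by auto
      moreover have "h x \<noteq> h y" using inj V h2(2) by (meson inj_on_eq_iff)
      moreover have "h w \<in> h ` deg3 V E" using h2(3) by blast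
      ultimately have "{h x, h y} \<in> construct_E (h ` V) ((`) h ` E)"
        unfolding construct_E_def deg3_image[OF inj ei] by blast
      then show ?thesis using e(2) h2(1) by simp
    qed
  qed
qed

lemma construct_E_image:
  assumes inj: "inj_on h V" and ei: "edges_in V E"
  shows "construct_E (h ` V) ((`) h ` E) = (`) h ` construct_E V E"
  using construct_E_image_subset[OF assms] image_construct_E_subset[OF assms] by (rule subset_antisym)

lemma iso_edges_eq_image:
  assumes g: "graph V E" and g': "graph V' E'" and b: "bij_betw f V V'"
    and corr: "\<forall>u\<in>V. \<forall>w\<in>V. {u, w} \<in> E \<longleftrightarrow> {f u, f w} \<in> E'"
  shows "E' = (`) f ` E"
proof
  show "E' \<subseteq> (`) f ` E"
  proof
    fix e' assume e': "e' \<in> E'"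
    then have "e' \<subseteq> V'" "card e' = 2" using g' unfolding graph_def by blast+
    then obtain a b where ab: "e' = {a,b}" "a \<in> V'" "b \<in> V'" by (metis card_2_iff insert_subset)
    have "V' = f ` V" using b unfolding bij_betw_def by simp
    then obtain u w where uw: "u \<in> V" "w \<in> V" "a = f u" "b = f w" using ab by blast
    then have "{u,w} \<in> E" using corr e' ab by blast
    moreover have "e' = f ` {u,w}" using ab uw by simp
    ultimately show "e' \<in> (`) f ` E" by blast
  qed
next
  show "(`) f ` E \<subseteq> E'"
  proof
    fix e' assume "e' \<in> (`) f ` E"
    then obtain e where e: "e \<in> E" "e' = f ` e" by blast
    then have "e \<subseteq> V" "card e = 2" using g unfolding graph_def by blast+
    then obtain u w where uw: "e = {u,w}" "u \<in> V" "w \<in> V" by (metis card_2_iff insert_subset)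
    then have "{f u, f w} \<in> E'" using corr e by blast
    then show "e' \<in> E'" using e uw by simp
  qed
qed

section \<open>Graphs constructed from trees\<close>

definition obtained_from_tree :: "'a set \<Rightarrow> 'a set set \<Rightarrow> 'b set \<Rightarrow> 'b set set \<Rightarrow> ('a \<Rightarrow> 'b) \<Rightarrow> bool" where
  "obtained_from_tree V E VT ET f \<longleftrightarrow>
     tree VT ET \<and> card VT \<ge> 3 \<and> (\<forall>v\<in>VT. degree ET v \<le> 3) \<and>
     independent ET {v \<in> VT. degree ET v = 1 \<or> degree ET v = 3} \<and>
     bij_betw f V (construct_V VT ET) \<and> (\<forall>u\<in>V. \<forall>w\<in>V. {u, w} \<in> E \<longleftrightarrow> {f u, f w} \<in> construct_E VT ET)"

locale tree_construction =
  fixes VT :: "'b set" and ET :: "'b set set"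
  assumes tr: "tree VT ET" and c3: "card VT \<ge> 3" and dg: "\<forall>v\<in>VT. degree ET v \<le> 3"
    and ind: "independent ET {v\<in>VT. degree ET v = 1 \<or> degree ET v = 3}"
begin

abbreviation "D \<equiv> deg3 VT ET"
abbreviation "V' \<equiv> construct_V VT ET"
abbreviation "E' \<equiv> construct_E VT ET"

definition nbrs :: "'b \<Rightarrow> 'b set" where "nbrs v = {u. {u,v} \<in> ET}"

lemma finite_VT: "finite VT" using tr unfolding tree_def graph_def by blast

lemma edgeD: "{u,v} \<in> ET \<Longrightarrow> u \<noteq> v \<and> u \<in> VT \<and> v \<in> VT"
proof -
  assume e: "{u,v} \<in> ET"
  then have "{u,v} \<subseteq> VT" "card {u,v} = 2" using tr unfolding tree_def graph_def by blast+
  then show ?thesis by (cases "u = v") auto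
qed

lemma nbrs_subset: "nbrs v \<subseteq> VT" unfolding nbrs_def using edgeD by blast

lemma finite_nbrs: "finite (nbrs v)" using nbrs_subset finite_VT finite_subset by blast

lemma degree_eq_card_nbrs: "degree ET v = card (nbrs v)" unfolding degree_def nbrs_def by simp

lemma mem_nbrs: "u \<in> nbrs v \<longleftrightarrow> {u,v} \<in> ET" unfolding nbrs_def by simp

lemma no_cycle: "\<not> has_cycle VT ET" using tr unfolding tree_def by blast

lemma reach_VT: "\<forall>x\<in>VT. \<forall>y\<in>VT. reach VT ET x y"
  using tr connected_graph_iff[OF finite_VT] unfolding tree_def by blast

lemma mem_D: "w \<in> D \<longleftrightarrow> w \<in> VT \<and> degree ET w = 3" unfolding deg3_def by simp

lemma D_neighbour:
  assumes "w \<in> D" "{x,w} \<in> ET"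
  shows "x \<notin> D \<and> degree ET x = 2 \<and> x \<in> VT"
proof -
  have x: "x \<in> VT" "w \<in> VT" using edgeD[OF assms(2)] by auto
  have "w \<in> nbrs x" using assms(2) mem_nbrs by (simp add: insert_commute)
  then have "degree ET x \<ge> 1" unfolding degree_eq_card_nbrs using finite_nbrs[of x]
    by (metis One_nat_def Suc_leI card_gt_0_iff empty_iff)
  moreover have "degree ET x \<le> 3" using dg x by blast
  moreover have "\<not> (degree ET x = 1 \<or> degree ET x = 3)"
  proof
    assume "degree ET x = 1 \<or> degree ET x = 3"
    then have "x \<in> {v\<in>VT. degree ET v = 1 \<or> degree ET v = 3}" using x by simp
    moreover have "w \<in> {v\<in>VT. degree ET v = 1 \<or> degree ET v = 3}" using assms(1) mem_D by simp
    ultimately have "{x,w} \<notin> ET" using ind unfolding independent_def by blast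
    then show False using assms(2) by simp
  qed
  ultimately have "degree ET x = 2" by linarith
  then show ?thesis using x mem_D by simp
qed

lemma D_nbrs_3:
  assumes "w \<in> D"
  obtains x y z where "nbrs w = {x,y,z}" "x \<noteq> y" "y \<noteq> z" "x \<noteq> z"
proof -
  have "card (nbrs w) = 3" using assms mem_D degree_eq_card_nbrs by simp
  then show ?thesis using that card_3_iff by metis
qed

lemma degree_2_nbrs:
  assumes "degree ET v = 2"
  obtains p q where "nbrs v = {p,q}" "p \<noteq> q"
proof -
  have "card (nbrs v) = 2" using assms degree_eq_card_nbrs by simp
  then show ?thesis using that card_2_iff by metis
qed

lemma mem_V': "x \<in> V' \<longleftrightarrow> x \<in> VT \<and> x \<notin> D" unfolding construct_V_def by blast

lemma E'_cases:
  assumes "{a,b} \<in> E'"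
  shows "({a,b} \<in> ET \<and> a \<notin> D \<and> b \<notin> D) \<or> (a \<noteq> b \<and> (\<exists>w\<in>D. {a,w} \<in> ET \<and> {b,w} \<in> ET))"
proof -
  have "({a,b} \<in> ET \<and> {a,b} \<inter> D = {}) \<or>
        (\<exists>x y. {a,b} = {x,y} \<and> x \<noteq> y \<and> (\<exists>w\<in>D. {x,w} \<in> ET \<and> {y,w} \<in> ET))"
    using assms unfolding construct_E_def by blast
  then show ?thesis
  proof
    assume "{a,b} \<in> ET \<and> {a,b} \<inter> D = {}" then show ?thesis by blast
  next
    assume "\<exists>x y. {a,b} = {x,y} \<and> x \<noteq> y \<and> (\<exists>w\<in>D. {x,w} \<in> ET \<and> {y,w} \<in> ET)"
    then obtain x y w where h: "{a,b} = {x,y}" "x \<noteq> y" "w \<in> D" "{x,w} \<in> ET" "{y,w} \<in> ET" by blast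
    then have "(a = x \<and> b = y) \<or> (a = y \<and> b = x)" by (metis doubleton_eq_iff)
    then show ?thesis using h by blast
  qed
qed

lemma E'_triangleI: "a \<noteq> b \<Longrightarrow> w \<in> D \<Longrightarrow> {a,w} \<in> ET \<Longrightarrow> {b,w} \<in> ET \<Longrightarrow> {a,b} \<in> E'"
  unfolding construct_E_def by blast

lemma graph_construct: "graph V' E'"
  unfolding graph_def
proof (intro conjI ballI)
  show "finite V'" using finite_VT unfolding construct_V_def by simp
next
  fix e assume e: "e \<in> E'"
  have "\<exists>a b. e = {a,b} \<and> a \<noteq> b \<and> a \<in> V' \<and> b \<in> V'"
  proof (cases "e \<in> ET \<and> e \<inter> D = {}")
    case True
    then have "e \<subseteq> VT" "card e = 2" using tr unfolding tree_def graph_def by blast+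
    then obtain a b where "e = {a,b}" "a \<noteq> b" by (meson card_2_iff)
    then show ?thesis using True \<open>e \<subseteq> VT\<close> mem_V' by blast
  next
    case False
    then obtain x y w where h: "e = {x,y}" "x \<noteq> y" "w \<in> D" "{x,w} \<in> ET" "{y,w} \<in> ET"
      using e unfolding construct_E_def by blast
    then show ?thesis using D_neighbour[OF h(3,4)] D_neighbour[OF h(3,5)] mem_V' by blast
  qed
  then show "e \<subseteq> V'" "card e = 2" by auto
qed

lemma card_nbrs_V': "x \<in> V' \<Longrightarrow> card (nbrs x) \<le> 2"
proof -
  assume "x \<in> V'"
  then have "x \<in> VT" "degree ET x \<noteq> 3" using mem_V' mem_D by auto
  then show ?thesis using dg degree_eq_card_nbrs by fastforce
qed

lemma claw_free_construct:  "claw_free V' E'"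
  unfolding claw_free_def
proof (intro notI, elim bexE conjE)
  fix c a b d assume H: "c \<in> V'" "a \<in> V'" "b \<in> V'" "d \<in> V'" "distinct [c, a, b, d]"
    "{c, a} \<in> E'" "{c, b} \<in> E'" "{c, d} \<in> E'" "{a, b} \<notin> E'" "{a, d} \<notin> E'" "{b, d} \<notin> E'"
  have grp: "\<exists>g. g \<in> nbrs c \<and> (g = q \<or> (g \<in> D \<and> {q,g} \<in> ET))" if "{c,q} \<in> E'" "q \<in> V'" for q
  proof -
    from E'_cases[OF that(1)] show ?thesis
    proof
      assume "{c,q} \<in> ET \<and> c \<notin> D \<and> q \<notin> D"
      then show ?thesis using mem_nbrs by (auto simp: insert_commute)
    next
      assume "c \<noteq> q \<and> (\<exists>w\<in>D. {c,w} \<in> ET \<and> {q,w} \<in> ET)"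
      then obtain w where "w \<in> D" "{c,w} \<in> ET" "{q,w} \<in> ET" by blast
      then show ?thesis using mem_nbrs by (auto simp: insert_commute)
    qed
  qed
  obtain ga where ga: "ga \<in> nbrs c" "ga = a \<or> (ga \<in> D \<and> {a,ga} \<in> ET)" using grp H by blast
  obtain gb where gb: "gb \<in> nbrs c" "gb = b \<or> (gb \<in> D \<and> {b,gb} \<in> ET)" using grp H by blast
  obtain gd where gd: "gd \<in> nbrs c" "gd = d \<or> (gd \<in> D \<and> {d,gd} \<in> ET)" using grp H by blast
  have same: "x = y \<or> {x,y} \<in> E'" if "gx \<in> nbrs c" "gx = x \<or> (gx \<in> D \<and> {x,gx} \<in> ET)"
     "gy = y \<or> (gy \<in> D \<and> {y,gy} \<in> ET)" "gx = gy" "x \<in> V'" "y \<in> V'" for x y gx gy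
  proof -
    have "x \<notin> D" "y \<notin> D" using that(5,6) mem_V' by auto
    then show ?thesis using that E'_triangleI by metis
  qed
  have "ga = gb \<or> ga = gd \<or> gb = gd"
    using card_le_2_pigeonhole[OF finite_nbrs card_nbrs_V'[OF H(1)] ga(1) gb(1) gd(1)] .
  then show False
  proof (elim disjE)
    assume "ga = gb" then show False using same[OF ga gb(2)] H by auto
  next
    assume "ga = gd" then show False using same[OF ga gd(2)] H by auto
  next
    assume "gb = gd" then show False using same[OF gb gd(2)] H by auto
  qed
qed

definition avoiding :: "'b set \<Rightarrow> 'b \<Rightarrow> 'b \<Rightarrow> bool" where
  "avoiding X p q \<longleftrightarrow> {p,q} \<in> ET \<and> p \<in> VT \<and> q \<in> VT \<and> p \<notin> X \<and> q \<notin> X"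

lemma avoiding_sym: "avoiding X p q \<Longrightarrow> avoiding X q p" unfolding avoiding_def by (auto simp: insert_commute)

lemma avoidingI: "{p,q} \<in> ET \<Longrightarrow> p \<notin> X \<Longrightarrow> q \<notin> X \<Longrightarrow> avoiding X p q"
  unfolding avoiding_def using edgeD by blast

lemma avoiding_two_steps: "avoiding X a w \<Longrightarrow> avoiding X w b \<Longrightarrow> (avoiding X)\<^sup>*\<^sup>* a b"
  using converse_rtranclp_into_rtranclp[of "avoiding X", OF _ r_into_rtranclp[of "avoiding X"]] by blast

lemma reach_construct_imp_avoiding:
  assumes r: "reach W F p q" and W: "W \<subseteq> V' - X" and F: "F \<subseteq> E'"
    and through: "\<And>a b w. {a,b} \<in> F \<Longrightarrow> a \<in> W \<Longrightarrow> b \<in> W \<Longrightarrow> a \<noteq> b \<Longrightarrow> w \<in> D \<Longrightarrow>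
      {a,w} \<in> ET \<Longrightarrow> {b,w} \<in> ET \<Longrightarrow> w \<notin> X"
  shows "(avoiding X)\<^sup>*\<^sup>* p q"
proof (rule reach_rtranclpI[OF r])
  fix a b assume ab: "a \<in> W" "b \<in> W" "{a,b} \<in> F"
  have aX: "a \<notin> X" "b \<notin> X" using ab W by auto
  from E'_cases[OF subsetD[OF F ab(3)]] show "(avoiding X)\<^sup>*\<^sup>* a b"
  proof
    assume "{a,b} \<in> ET \<and> a \<notin> D \<and> b \<notin> D"
    then show ?thesis using avoidingI aX by blast
  next
    assume "a \<noteq> b \<and> (\<exists>w\<in>D. {a,w} \<in> ET \<and> {b,w} \<in> ET)"
    then obtain w where w: "a \<noteq> b" "w \<in> D" "{a,w} \<in> ET" "{b,w} \<in> ET" by blast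
    then have "w \<notin> X" using through ab by blast
    have "avoiding X a w" by (rule avoidingI[OF w(3) aX(1) \<open>w \<notin> X\<close>])
    moreover have "avoiding X w b" using avoidingI[of w b X] w(4) aX(2) \<open>w \<notin> X\<close> by (simp add: insert_commute)
    ultimately show ?thesis by (rule avoiding_two_steps)
  qed
qed

lemma V'_representative:
  assumes "{x,p} \<in> ET"
  obtains p3 where "p3 \<in> V'" "p3 \<noteq> x" "p3 = p \<or> ({p3,p} \<in> ET \<and> p \<in> D)"
proof (cases "p \<in> D")
  case False
  then have "p \<in> V'" "p \<noteq> x" using edgeD[OF assms] mem_V' by auto
  then show ?thesis using that by blast
next
  case True
  obtain a b c where abc: "nbrs p = {a,b,c}" "a \<noteq> b" "b \<noteq> c" "a \<noteq> c" using D_nbrs_3[OF True] by blast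
  obtain y where y: "y \<in> nbrs p" "y \<noteq> x" using abc by (metis insertI1 insert_commute)
  have "{y,p} \<in> ET" using y mem_nbrs by blast
  then have "y \<in> V'" using D_neighbour[OF True] mem_V' by (auto simp: insert_commute)
  then show ?thesis using that y \<open>{y,p} \<in> ET\<close> True by blast
qed

lemma cut_vertex_of_degree_2:
  assumes x: "x \<in> VT" "x \<notin> D" "degree ET x = 2"
  shows "x \<in> V' \<and> num_comp (V' - {x}) E' \<ge> 2"
proof -
  obtain p q where pq: "nbrs x = {p,q}" "p \<noteq> q" using degree_2_nbrs[OF x(3)] by blast
  have ep: "{x,p} \<in> ET" and eq: "{x,q} \<in> ET" using pq mem_nbrs by (auto simp: insert_commute)
  obtain p3 where p3: "p3 \<in> V'" "p3 \<noteq> x" "p3 = p \<or> ({p3,p} \<in> ET \<and> p \<in> D)" using V'_representative[OF ep] by blast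
  obtain q3 where q3: "q3 \<in> V'" "q3 \<noteq> x" "q3 = q \<or> ({q3,q} \<in> ET \<and> q \<in> D)" using V'_representative[OF eq] by blast
  have px: "p \<noteq> x" "q \<noteq> x" using edgeD[OF ep] edgeD[OF eq] by auto
  let ?R = "avoiding {x}"
  have "\<not> reach (V' - {x}) E' p3 q3"
  proof
    assume r: "reach (V' - {x}) E' p3 q3"
    have "?R\<^sup>*\<^sup>* p3 q3" by (rule reach_construct_imp_avoiding[OF r]) (use x(2) in auto)
    moreover have "?R\<^sup>*\<^sup>* p p3"
      using p3(2,3) px avoidingI[of p3 p "{x}"] avoiding_sym by (metis r_into_rtranclp rtranclp.rtrancl_refl singletonD)
    moreover have "?R\<^sup>*\<^sup>* q3 q"
      using q3(2,3) px avoidingI[of q3 q "{x}"] by (metis r_into_rtranclp rtranclp.rtrancl_refl singletonD)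
    ultimately have rpq: "?R\<^sup>*\<^sup>* p q" by (meson rtranclp_trans)
    show False
    proof (rule no_cycle_closing_path[OF no_cycle rpq, of "[x]"])
      show "\<And>a b. ?R a b \<Longrightarrow> {a,b} \<in> ET \<and> a \<in> VT \<and> b \<in> VT \<and> a \<notin> set [x] \<and> b \<notin> set [x]"
        unfolding avoiding_def by simp
      show "p \<in> VT" using edgeD[OF ep] by simp
      show "p \<notin> set [x]" "q \<notin> set [x]" "distinct [x]" "set [x] \<subseteq> VT" using px x by auto
      show "successively (\<lambda>a b. {a,b} \<in> ET) (q # [x] @ [p])" using ep eq by (simp add: insert_commute)
      show "(p \<noteq> q \<and> ([x] \<noteq> [] \<or> \<not> ?R p q)) \<or> (p = q \<and> length [x] \<ge> 2)" using pq by simp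
    qed
  qed
  moreover have "p3 \<in> V' - {x}" "q3 \<in> V' - {x}" using p3 q3 by auto
  moreover have "finite (V' - {x})" using finite_VT unfolding construct_V_def by simp
  ultimately have "num_comp (V' - {x}) E' \<ge> 2" using num_comp_ge_2I by metis
  then show ?thesis using x mem_V' by simp
qed

lemma exists_degree_2: "\<exists>x. x \<in> VT \<and> x \<notin> D \<and> degree ET x = 2"
proof (cases "D = {}")
  case False
  then obtain w where w: "w \<in> D" by blast
  obtain a b c where "nbrs w = {a,b,c}" using D_nbrs_3[OF w] by metis
  then have "{a,w} \<in> ET" using mem_nbrs by blast
  then show ?thesis using D_neighbour[OF w] by blast
next
  case True
  have "\<exists>v. card (nbrs v) \<ge> 2"
  proof (rule ccontr)
    assume "\<not> (\<exists>v. card (nbrs v) \<ge> 2)"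
    then have le1: "card (nbrs v) \<le> Suc 0" for v using not_le less_Suc_eq_le numeral_2_eq_2 by metis
    obtain a where a: "a \<in> VT" using c3 by fastforce
    \<comment> \<open>if all degrees are at most 1, a and its neighbour form a whole component\<close>
    have "VT \<subseteq> insert a (nbrs a)"
    proof
      fix y assume "y \<in> VT"
      then have "reach VT ET a y" using reach_VT a by blast
      then show "y \<in> insert a (nbrs a)"
      proof (rule reach_closed)
        fix p q assume "p \<in> insert a (nbrs a)" "{p,q} \<in> ET"
        moreover have "q = a" if "p \<in> nbrs a" "{p,q} \<in> ET"
        proof -
          have "a \<in> nbrs p" "q \<in> nbrs p" using that mem_nbrs by (auto simp: insert_commute)
          then show ?thesis using card_le_Suc0_iff_eq[OF finite_nbrs[of p]] le1[of p] by blast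
        qed
        ultimately show "q \<in> insert a (nbrs a)" using mem_nbrs by (auto simp: insert_commute)
      qed simp
    qed
    then have "card VT \<le> card (insert a (nbrs a))" using finite_nbrs by (intro card_mono) auto
    also have "\<dots> \<le> Suc (card (nbrs a))" using finite_nbrs by (simp add: card_insert_le_m1)
    finally show False using le1[of a] c3 by simp
  qed
  then obtain v where v: "card (nbrs v) \<ge> 2" by blast
  then obtain u where "u \<in> nbrs v" by fastforce
  then have "v \<in> VT" using mem_nbrs edgeD by blast
  then have "degree ET v \<le> 3" "degree ET v \<noteq> 3" using dg True mem_D by auto
  then have "degree ET v = 2" using v degree_eq_card_nbrs by simp
  then show ?thesis using \<open>v \<in> VT\<close> True by blast
qed

lemma tree_edge_is_bridge:
  assumes "{u,v} \<in> ET" "u \<notin> D" "v \<notin> D"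
  shows "num_comp V' (E' - {{u,v}}) \<ge> 2"
proof -
  let ?e = "{u,v}"
  let ?R = "\<lambda>p q. {p,q} \<in> ET \<and> {p,q} \<noteq> ?e"
  have uv: "u \<noteq> v" "u \<in> V'" "v \<in> V'" using edgeD[OF assms(1)] assms mem_V' by auto
  have "\<not> reach V' (E' - {?e}) u v"
  proof
    assume r: "reach V' (E' - {?e}) u v"
    have Ruv: "?R\<^sup>*\<^sup>* u v"
    proof (rule reach_rtranclpI[OF r])
      fix a b assume ab: "a \<in> V'" "b \<in> V'" "{a,b} \<in> E' - {?e}"
      have c: "{a,b} \<in> E'" "{a,b} \<noteq> ?e" using ab(3) by auto
      from E'_cases[OF c(1)] show "?R\<^sup>*\<^sup>* a b"
      proof
        assume "{a,b} \<in> ET \<and> a \<notin> D \<and> b \<notin> D"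
        then show ?thesis using c(2) by auto
      next
        assume "a \<noteq> b \<and> (\<exists>w\<in>D. {a,w} \<in> ET \<and> {b,w} \<in> ET)"
        then obtain w where w: "w \<in> D" "{a,w} \<in> ET" "{b,w} \<in> ET" by blast
        have "w \<noteq> u" "w \<noteq> v" using w(1) assms(2,3) by auto
        then have "{a,w} \<noteq> ?e" "{w,b} \<noteq> ?e" by auto
        then have r1: "?R a w" and r2: "?R w b" using w by (auto simp: insert_commute)
        show ?thesis using converse_rtranclp_into_rtranclp[of ?R, OF r1 r_into_rtranclp[of ?R, OF r2]] .
      qed
    qed
    show False
    proof (rule no_cycle_closing_path[OF no_cycle Ruv, of "[]"])
      show "\<And>x y. ?R x y \<Longrightarrow> {x,y} \<in> ET \<and> x \<in> VT \<and> y \<in> VT \<and> x \<notin> set [] \<and> y \<notin> set []"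
        using edgeD by (simp; blast)
      show "u \<in> VT" using edgeD[OF assms(1)] by simp
      show "u \<notin> set []" "v \<notin> set []" "distinct []" "set [] \<subseteq> VT" by auto
      show "successively (\<lambda>a b. {a,b} \<in> ET) (v # [] @ [u])" using assms(1) by (simp add: insert_commute)
      show "(u \<noteq> v \<and> ([] \<noteq> [] \<or> \<not> ?R u v)) \<or> (u = v \<and> length [] \<ge> 2)" using uv by simp
    qed
  qed
  moreover have "finite V'" using finite_VT unfolding construct_V_def by simp
  ultimately show ?thesis using num_comp_ge_2I uv by metis
qed

lemma D_third_neighbour:
  assumes "w \<in> D" "{x,w} \<in> ET" "{y,w} \<in> ET" "x \<noteq> y"
  obtains z where "nbrs w = {x,y,z}" "z \<noteq> x" "z \<noteq> y"
proof -
  obtain a b c where abc: "nbrs w = {a,b,c}" "a \<noteq> b" "b \<noteq> c" "a \<noteq> c" using D_nbrs_3[OF assms(1)] by blast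
  have xy: "x \<in> nbrs w" "y \<in> nbrs w" using assms(2,3) mem_nbrs by auto
  then obtain z where z: "z \<in> nbrs w" "z \<noteq> x" "z \<noteq> y" using abc assms(4) by auto
  have "{x,y,z} \<subseteq> nbrs w" "card {x,y,z} = card (nbrs w)" using z xy abc assms(4) by auto
  then have "nbrs w = {x,y,z}" using finite_nbrs by (metis card_subset_eq)
  then show ?thesis using that z by blast
qed

lemma triangle_edge_cut:
  assumes xy: "x \<noteq> y" and w: "w \<in> D" "{x,w} \<in> ET" "{y,w} \<in> ET"
  shows "\<exists>z. z \<in> V' \<and> num_comp (V' - {z}) (E' - {{x,y}}) \<ge> 3"
proof -
  let ?e = "{x,y}"
  obtain z where nbw: "nbrs w = {x,y,z}" and z: "z \<noteq> x" "z \<noteq> y"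
    using D_third_neighbour[OF w xy] by blast
  have zw: "{z,w} \<in> ET" using nbw mem_nbrs by blast
  have zD: "z \<notin> D" "degree ET z = 2" "z \<in> VT" using D_neighbour[OF w(1) zw] by auto
  have xD: "x \<notin> D" "x \<in> VT" and yD: "y \<notin> D" "y \<in> VT" using D_neighbour[OF w(1)] w by auto
  obtain p q where pq: "nbrs z = {p,q}" "p \<noteq> q" using degree_2_nbrs[OF zD(2)] by blast
  have "w \<in> nbrs z" using zw mem_nbrs by (simp add: insert_commute)
  then obtain z' where z': "z' \<in> nbrs z" "z' \<noteq> w" using pq by (metis insertCI)
  have zz': "{z,z'} \<in> ET" using z' mem_nbrs by (simp add: insert_commute)
  obtain z3 where z3: "z3 \<in> V'" "z3 \<noteq> z" "z3 = z' \<or> ({z3,z'} \<in> ET \<and> z' \<in> D)" using V'_representative[OF zz'] by blast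
  have wz: "w \<noteq> z" using zD w(1) by blast
  have z'z: "z' \<noteq> z" using edgeD[OF zz'] by auto
  have wx: "w \<noteq> x" "w \<noteq> y" using w edgeD by auto
  let ?R = "avoiding {w,z}"
  have transfer: "?R\<^sup>*\<^sup>* p1 p2" if r: "reach (V' - {z}) (E' - {?e}) p1 p2" for p1 p2
  proof (rule reach_construct_imp_avoiding[OF r])
    show "V' - {z} \<subseteq> V' - {w,z}" using w(1) mem_V' by blast
    fix a b w' assume h: "{a,b} \<in> E' - {?e}" "a \<in> V' - {z}" "b \<in> V' - {z}" "a \<noteq> b" "w' \<in> D"
      "{a,w'} \<in> ET" "{b,w'} \<in> ET"
    \<comment> \<open>the only edge of E' through w that avoids z is the deleted edge {x,y}\<close>
    have "w' \<noteq> w"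
    proof
      assume "w' = w"
      then have "a \<in> {x,y}" "b \<in> {x,y}" using h nbw mem_nbrs by auto
      then show False using h(1,4) by auto
    qed
    then show "w' \<notin> {w,z}" using h(5) zD by blast
  qed auto
  have Redge: "\<And>u v. avoiding {w,z} u v \<Longrightarrow> {u,v} \<in> ET \<and> u \<in> VT \<and> v \<in> VT \<and> u \<notin> set ps \<and> v \<notin> set ps"
    if "set ps \<subseteq> {w,z}" for ps
    using that unfolding avoiding_def by blast
  have inV: "x \<in> V' - {z}" "y \<in> V' - {z}" "z3 \<in> V' - {z}" using xD yD z z3 mem_V' by auto
  have n1: "\<not> reach (V' - {z}) (E' - {?e}) x y"
  proof
    assume "reach (V' - {z}) (E' - {?e}) x y"
    from transfer[OF this] have r: "?R\<^sup>*\<^sup>* x y" .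
    show False
    proof (rule no_cycle_closing_path[OF no_cycle r, of "[w]"])
      show "\<And>u v. ?R u v \<Longrightarrow> {u,v} \<in> ET \<and> u \<in> VT \<and> v \<in> VT \<and> u \<notin> set [w] \<and> v \<notin> set [w]"
        using Redge[of "[w]"] by simp
      show "x \<in> VT" "x \<notin> set [w]" "y \<notin> set [w]" "distinct [w]" "set [w] \<subseteq> VT"
        using xD wx w(1) mem_D by auto
      show "successively (\<lambda>a b. {a,b} \<in> ET) (y # [w] @ [x])" using w by (simp add: insert_commute)
      show "(x \<noteq> y \<and> ([w] \<noteq> [] \<or> \<not> ?R x y)) \<or> (x = y \<and> length [w] \<ge> 2)" using xy by simp
    qed
  qed
  have n2: "\<not> reach (V' - {z}) (E' - {?e}) x0 z3" if x0: "x0 \<in> {x,y}" for x0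
  proof
    assume "reach (V' - {z}) (E' - {?e}) x0 z3"
    from transfer[OF this] have r0: "?R\<^sup>*\<^sup>* x0 z3" .
    have x0w: "{x0,w} \<in> ET" "x0 \<in> VT" "x0 \<noteq> z" "x0 \<noteq> w" using x0 w xD yD z wx by auto
    have "?R\<^sup>*\<^sup>* z3 z'"
    proof (cases "z3 = z'")
      case False
      then have "{z3,z'} \<in> ET" using z3 by blast
      moreover have "z3 \<noteq> w" using z3(1) w(1) mem_V' by blast
      ultimately have "?R z3 z'" using z3(2) z'(2) z'z by (intro avoidingI) auto
      then show ?thesis by blast
    qed simp
    with r0 have r: "?R\<^sup>*\<^sup>* x0 z'" by (rule rtranclp_trans)
    show False
    proof (rule no_cycle_closing_path[OF no_cycle r, of "[z,w]"])
      show "\<And>u v. ?R u v \<Longrightarrow> {u,v} \<in> ET \<and> u \<in> VT \<and> v \<in> VT \<and> u \<notin> set [z,w] \<and> v \<notin> set [z,w]"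
        using Redge[of "[z,w]"] by simp
      show "x0 \<in> VT" "x0 \<notin> set [z,w]" "z' \<notin> set [z,w]" "distinct [z,w]" "set [z,w] \<subseteq> VT"
        using x0w z'(2) z'z wz zD w(1) mem_D by auto
      show "successively (\<lambda>a b. {a,b} \<in> ET) (z' # [z,w] @ [x0])" using zz' zw x0w
        by (simp add: insert_commute)
      show "(x0 \<noteq> z' \<and> ([z,w] \<noteq> [] \<or> \<not> ?R x0 z')) \<or> (x0 = z' \<and> length [z,w] \<ge> 2)" by auto
    qed
  qed
  have fin: "finite (V' - {z})" using finite_VT unfolding construct_V_def by simp
  have "num_comp (V' - {z}) (E' - {?e}) \<ge> 3"
    by (rule num_comp_ge_3I[OF fin inV n1 n2 n2]) auto
  then show ?thesis using zD mem_V' by blast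
qed

lemma finite_V': "finite V'" using finite_VT unfolding construct_V_def by simp

lemma construct_minimally_tough_claw_free:
  assumes cg: "connected_graph V' E'"
  shows "minimally_tough (1/2) V' E' \<and> claw_free V' E'"
proof -
  have conn: "\<forall>a\<in>V'. \<forall>b\<in>V'. reach V' E' a b" using cg connected_graph_iff[OF finite_V'] by blast
  obtain x0 where x0: "x0 \<in> VT" "x0 \<notin> D" "degree ET x0 = 2" using exists_degree_2 by blast
  have cx: "x0 \<in> V'" "num_comp (V' - {x0}) E' \<ge> 2" using cut_vertex_of_degree_2[OF x0] by auto
  have cut0: "cutset V' E' {x0}" unfolding cutset_def using cx by simp
  have t: "toughness V' E' = ereal (1/2)"
  proof (rule toughness_eqI[OF finite_V' cut0])
    show "real (card {x0}) / real (num_comp (V' - {x0}) E') \<le> 1/2"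
      using cx(2) by (simp add: divide_simps)
  next
    fix S assume S: "cutset V' E' S"
    have Ssub: "S \<subseteq> V'" and om: "num_comp (V' - S) E' \<ge> 2" using S unfolding cutset_def by auto
    have "S \<noteq> {}"
    proof
      assume "S = {}"
      then have "num_comp V' E' \<ge> 2" using om by simp
      then show False using cg unfolding connected_graph_def by simp
    qed
    then have "num_comp (V' - S) E' \<le> 2 * card S" using claw_free_num_comp_le[OF finite_V' claw_free_construct conn Ssub] by blast
    then show "1/2 \<le> real (card S) / real (num_comp (V' - S) E')" using om by (simp add: divide_simps)
  qed
  have m: "toughness V' (E' - {e}) < ereal (1/2)" if e: "e \<in> E'" for e
  proof -
    obtain a b where ab: "e = {a,b}" "a \<noteq> b"
      using e graph_construct unfolding graph_def by (meson card_2_iff)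
    have "{a,b} \<in> E'" using e ab by simp
    from E'_cases[OF this] show ?thesis
    proof (elim disjE conjE)
      assume h: "{a,b} \<in> ET" "a \<notin> D" "b \<notin> D"
      have c: "num_comp V' (E' - {e}) \<ge> 2" using tree_edge_is_bridge[OF h] ab by simp
      have "cutset V' (E' - {e}) {}" unfolding cutset_def using c by simp
      from toughness_le_cut_ratio[OF finite_V' this] have "toughness V' (E' - {e}) \<le> ereal 0" by simp
      moreover have "ereal 0 < ereal (1/2)" by simp
      ultimately show ?thesis by (rule order.strict_trans1)
    next
      assume h: "a \<noteq> b" "\<exists>w\<in>D. {a,w} \<in> ET \<and> {b,w} \<in> ET"
      then obtain w where w: "w \<in> D" "{a,w} \<in> ET" "{b,w} \<in> ET" by blast
      obtain z where z: "z \<in> V'" "num_comp (V' - {z}) (E' - {{a,b}}) \<ge> 3" using triangle_edge_cut[OF h(1) w] by blast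
      have "cutset V' (E' - {e}) {z}" unfolding cutset_def using z ab by simp
      from toughness_le_cut_ratio[OF finite_V' this]
      have "toughness V' (E' - {e}) \<le> ereal (real (card {z}) / real (num_comp (V' - {z}) (E' - {e})))" .
      moreover have "real (card {z}) / real (num_comp (V' - {z}) (E' - {e})) < 1/2"
        using z(2) ab by (simp add: divide_simps)
      then have "ereal (real (card {z}) / real (num_comp (V' - {z}) (E' - {e}))) < ereal (1/2)" by simp
      ultimately show ?thesis by (rule order.strict_trans1)
    qed
  qed
  show ?thesis unfolding minimally_tough_def using t m claw_free_construct by blast
qed

end

lemma minimally_tough_claw_free_if_obtained_from_tree:
  assumes g: "graph V E" and cg: "connected_graph V E" and T: "obtained_from_tree V E VT ET f"
  shows "minimally_tough (1/2) V E \<and> claw_free V E"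
proof -
  interpret tree_construction VT ET using T unfolding obtained_from_tree_def by unfold_locales auto
  have b: "bij_betw f V (construct_V VT ET)" using T unfolding obtained_from_tree_def by blast
  have Eeq: "construct_E VT ET = (`) f ` E"
    using iso_edges_eq_image[OF g graph_construct b] T unfolding obtained_from_tree_def by blast
  have Veq: "construct_V VT ET = f ` V" and inj: "inj_on f V" using b unfolding bij_betw_def by auto
  have ei: "edges_in V E" using g by (rule graph_edges_in)
  have "connected_graph (f ` V) ((`) f ` E)"
    using cg num_comp_image[OF subset_refl inj ei] unfolding connected_graph_def by simp
  then have "minimally_tough (1/2) (f ` V) ((`) f ` E) \<and> claw_free (f ` V) ((`) f ` E)"
    using construct_minimally_tough_claw_free Veq Eeq by simp
  then show ?thesis using minimally_tough_image[OF inj ei] claw_free_preimage[OF inj ei] by blast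
qed

lemma obtained_from_tree_relabel:
  assumes T: "obtained_from_tree V E VT ET f" and h: "inj_on h VT"
  shows "obtained_from_tree V E (h ` VT) ((`) h ` ET) (h \<circ> f)"
proof -
  interpret tree_construction VT ET using T unfolding obtained_from_tree_def by unfold_locales auto
  have ei: "edges_in VT ET" using tr unfolding tree_def by (blast intro: graph_edges_in)
  have b: "bij_betw f V V'" and corr: "\<forall>u\<in>V. \<forall>w\<in>V. {u, w} \<in> E \<longleftrightarrow> {f u, f w} \<in> E'"
    using T unfolding obtained_from_tree_def by auto
  have V'T: "V' \<subseteq> VT" unfolding construct_V_def by blast
  have eiE': "edges_in VT E'" using graph_construct V'T unfolding graph_def edges_in_def by blast
  have "bij_betw (h \<circ> f) V (h ` V')"
    using bij_betw_trans[OF b inj_on_imp_bij_betw[OF inj_on_subset[OF h V'T]]] .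
  moreover have "{(h \<circ> f) u, (h \<circ> f) w} \<in> (`) h ` E' \<longleftrightarrow> {u, w} \<in> E" if "u \<in> V" "w \<in> V" for u w
  proof -
    have "f u \<in> VT" "f w \<in> VT" using b that V'T unfolding bij_betw_def by auto
    then show ?thesis using image_edge_iff[OF h eiE'] corr that by simp
  qed
  moreover have "independent ((`) h ` ET) (h ` {v \<in> VT. degree ET v = 1 \<or> degree ET v = 3})"
    by (rule independent_image[OF h ei _ ind]) blast
  ultimately show ?thesis
    unfolding obtained_from_tree_def construct_V_image[OF h ei] construct_E_image[OF h ei]
      leaf_or_deg3_image[OF h ei]
    using tree_image[OF tr h] c3 dg degree_image[OF h ei] card_image[OF h] by auto
qed

lemma obtained_from_nat_tree:
  assumes "obtained_from_tree V E VT ET f"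
  shows "\<exists>(VT' :: nat set) ET' f'. obtained_from_tree V E VT' ET' f'"
proof -
  have "tree VT ET" using assms unfolding obtained_from_tree_def by blast
  then have "finite VT" unfolding tree_def graph_def by blast
  then obtain h :: "'b \<Rightarrow> nat" and n where "h ` VT = {i. i < n}" "inj_on h VT"
    using finite_imp_inj_to_nat_seg[OF \<open>finite VT\<close>] by blast
  from obtained_from_tree_relabel[OF assms this(2)] show ?thesis by blast
qed

section \<open>Minimally 1/2-tough claw-free graphs come from trees\<close>

locale min_tough_claw_free =
  fixes V :: "'a set" and E :: "'a set set"
  assumes g: "graph V E" and cf: "claw_free V E" and mt: "minimally_tough (1/2) V E"
begin

lemma finite_V: "finite V" using g unfolding graph_def by blast

lemma edgeD: "{u,v} \<in> E \<Longrightarrow> u \<noteq> v \<and> u \<in> V \<and> v \<in> V"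
proof -
  assume e: "{u,v} \<in> E"
  then have "{u,v} \<subseteq> V" "card {u,v} = 2" using g unfolding graph_def by blast+
  then show ?thesis by (cases "u = v") auto
qed

lemma toughness_half: "toughness V E = ereal (1/2)" using mt unfolding minimally_tough_def by blast

lemma reach_V: "\<forall>x\<in>V. \<forall>y\<in>V. reach V E x y"
proof (intro ballI, rule ccontr)
  fix x y assume xy: "x \<in> V" "y \<in> V" "\<not> reach V E x y"
  have "num_comp V E \<ge> 2" using num_comp_ge_2I[OF finite_V xy] .
  then have "cutset V E {}" unfolding cutset_def by simp
  from toughness_le_cut_ratio[OF finite_V this] have "toughness V E \<le> ereal 0" by simp
  then show False using toughness_half by simp
qed

lemma card_V_ge_3: "card V \<ge> 3"
proof -
  obtain S where S: "cutset V E S" using toughness_finite_cutset[OF toughness_half] by blast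
  then have Ssub: "S \<subseteq> V" and om: "num_comp (V - S) E \<ge> 2" unfolding cutset_def by auto
  have finU: "finite (V - S)" using finite_V by simp
  obtain x y where xy: "x \<in> V - S" "y \<in> V - S" "\<not> reach (V - S) E x y"
    using om num_comp_ge_2_iff[OF finU] by blast
  have "S \<noteq> {}"
  proof
    assume "S = {}"
    then show False using xy reach_V by simp
  qed
  then obtain s where s: "s \<in> S" by blast
  have "x \<noteq> y" using xy(3) by auto
  moreover have "s \<noteq> x" "s \<noteq> y" using xy s by auto
  ultimately have "card {s,x,y} = 3" by simp
  moreover have "{s,x,y} \<subseteq> V" using xy s Ssub by auto
  ultimately show ?thesis using card_mono[OF finite_V] by metis
qed

lemma claw_free_separated_triple:
  assumes S: "S \<subseteq> V" and s: "s \<in> S" and H: "H = E - {{u,v}}"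
    and C: "C1 \<in> component (V - S) H ` (V - S)" "C2 \<in> component (V - S) H ` (V - S)" "C3 \<in> component (V - S) H ` (V - S)"
    "C1 \<noteq> C2" "C1 \<noteq> C3" "C2 \<noteq> C3"
    and c: "c1 \<in> C1" "c2 \<in> C2" "c3 \<in> C3" "{c1,s} \<in> H" "{c2,s} \<in> H" "{c3,s} \<in> H"
  shows "{c1,c2} = {u,v} \<or> {c1,c3} = {u,v} \<or> {c2,c3} = {u,v}"
proof (rule ccontr)
  assume na: "\<not> ({c1,c2} = {u,v} \<or> {c1,c3} = {u,v} \<or> {c2,c3} = {u,v})"
  have d12: "\<not> reach (V - S) H c1 c2 \<and> c1 \<noteq> c2" by (rule distinct_components_not_reach[OF C(1,2,4) c(1,2)])
  have d13: "\<not> reach (V - S) H c1 c3 \<and> c1 \<noteq> c3" by (rule distinct_components_not_reach[OF C(1,3,5) c(1,3)])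
  have d23: "\<not> reach (V - S) H c2 c3 \<and> c2 \<noteq> c3" by (rule distinct_components_not_reach[OF C(2,3,6) c(2,3)])
  have i1: "c1 \<in> V - S" by (rule components_mem[OF C(1) c(1)])
  have i2: "c2 \<in> V - S" by (rule components_mem[OF C(2) c(2)])
  have i3: "c3 \<in> V - S" by (rule components_mem[OF C(3) c(3)])
  have "{c1,c2} \<notin> H" using d12 reach_edge[OF i1 i2] by blast
  then have n12: "{c1,c2} \<notin> E" using na H by blast
  have "{c1,c3} \<notin> H" using d13 reach_edge[OF i1 i3] by blast
  then have n13: "{c1,c3} \<notin> E" using na H by blast
  have "{c2,c3} \<notin> H" using d23 reach_edge[OF i2 i3] by blast
  then have n23: "{c2,c3} \<notin> E" using na H by blast
  have "distinct [s, c1, c2, c3]" using d12 d13 d23 i1 i2 i3 s by auto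
  moreover have "{s, c1} \<in> E" "{s, c2} \<in> E" "{s, c3} \<in> E" using c H by (auto simp: insert_commute)
  moreover have "s \<in> V" "c1 \<in> V" "c2 \<in> V" "c3 \<in> V" using s S i1 i2 i3 by auto
  ultimately show False using cf n12 n13 n23 unfolding claw_free_def by blast
qed

lemma sparse_cutset_of_edge_deletion:
  assumes e: "{u,v} \<in> E" and nonbridge: "reach V (E - {{u,v}}) u v"
  obtains S where "S \<subseteq> V" "S \<noteq> {}" "u \<notin> S" "v \<notin> S"
    "2 * card S < num_comp (V - S) (E - {{u,v}})"
proof -
  define H where "H = E - {{u,v}}"
  have conn: "\<forall>x\<in>V. \<forall>y\<in>V. reach V H x y"
    using reach_remove_edge[OF nonbridge] reach_V unfolding H_def by blast
  have "toughness V H < ereal (1/2)" using mt e unfolding minimally_tough_def H_def by blast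
  then obtain S where S: "cutset V H S" "real (card S) / real (num_comp (V - S) H) < 1/2"
    using toughness_less_cutset[OF finite_V] by blast
  have Ssub: "S \<subseteq> V" and om: "num_comp (V - S) H \<ge> 2" using S(1) unfolding cutset_def by auto
  have sparse: "2 * card S < num_comp (V - S) H" using S(2) om by (simp add: divide_simps)
  have Sne: "S \<noteq> {}"
  proof
    assume "S = {}"
    then show False using num_comp_le_1I[of V H] conn om by simp
  qed
  \<comment> \<open>if S met the edge, it would be a cutset of G itself, violating the claw-free bound\<close>
  have "u \<notin> S \<and> v \<notin> S"
  proof (rule ccontr)
    assume "\<not> (u \<notin> S \<and> v \<notin> S)"
    then have "num_comp (V - S) H = num_comp (V - S) E"
      unfolding H_def by (intro num_comp_Diff_not_subset) auto
    also have "\<dots> \<le> 2 * card S" by (rule claw_free_num_comp_le[OF finite_V cf reach_V Ssub Sne])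
    finally show False using sparse by simp
  qed
  then show ?thesis using that Ssub Sne sparse unfolding H_def by blast
qed

lemma separator_meets_two_components:
  assumes S: "S \<subseteq> V" "s \<in> S" and H_def: "H = E - {{u,v}}"
    and X_def: "X = {C \<in> component (V - S) H ` (V - S). \<exists>c\<in>C. {c,s} \<in> H}"
  shows "card X \<le> (if component (V - S) H u \<in> X \<and> component (V - S) H v \<in> X \<and>
      component (V - S) H u \<noteq> component (V - S) H v then 3 else 2)"
proof (rule card_le_3_if_triples_contain)
  show "finite X" using finite_V unfolding X_def by simp
  let ?C = "component (V - S) H"
  fix C1 C2 C3 assume C: "C1 \<in> X" "C2 \<in> X" "C3 \<in> X" "C1 \<noteq> C2" "C1 \<noteq> C3" "C2 \<noteq> C3"
  obtain c1 c2 c3 where c: "c1 \<in> C1" "c2 \<in> C2" "c3 \<in> C3" "{c1,s} \<in> H" "{c2,s} \<in> H" "{c3,s} \<in> H"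
    using C(1-3) unfolding X_def by blast
  have CA: "C1 \<in> ?C ` (V - S)" "C2 \<in> ?C ` (V - S)" "C3 \<in> ?C ` (V - S)" using C(1-3) unfolding X_def by auto
  have Cc: "C1 = ?C c1" "C2 = ?C c2" "C3 = ?C c3"
    using component_of_mem[OF CA(1) c(1)] component_of_mem[OF CA(2) c(2)] component_of_mem[OF CA(3) c(3)] .
  have pair: "?C u \<in> {Ci, Cj} \<and> ?C v \<in> {Ci, Cj} \<and> ?C u \<noteq> ?C v"
    if "{ci,cj} = {u,v}" "Ci = ?C ci" "Cj = ?C cj" "Ci \<noteq> Cj" for ci cj Ci Cj
  proof -
    from that(1) have "(ci = u \<and> cj = v) \<or> (ci = v \<and> cj = u)" by (simp add: doubleton_eq_iff)
    then show ?thesis using that(2-4) by blast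
  qed
  from claw_free_separated_triple[OF S H_def CA C(4-6) c]
  show "?C u \<in> {C1, C2, C3} \<and> ?C v \<in> {C1, C2, C3} \<and> ?C u \<noteq> ?C v"
  proof (elim disjE)
    assume "{c1,c2} = {u,v}" then show ?thesis using pair[OF _ Cc(1,2) C(4)] by auto
  next
    assume "{c1,c3} = {u,v}" then show ?thesis using pair[OF _ Cc(1,3) C(5)] by auto
  next
    assume "{c2,c3} = {u,v}" then show ?thesis using pair[OF _ Cc(2,3) C(6)] by auto
  qed
qed

lemma separator_of_three_components:
  assumes S: "S \<subseteq> V" "s \<in> S"
    and three: "3 \<le> card {C \<in> component (V - S) (E - {{u,v}}) ` (V - S). \<exists>c\<in>C. {c,s} \<in> E - {{u,v}}}"
  shows "{s,u} \<in> E \<and> {s,v} \<in> E \<and> (\<exists>d. {s,d} \<in> E \<and> d \<noteq> u \<and> d \<noteq> v \<and> {d,u} \<notin> E \<and> {d,v} \<notin> E)"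
proof -
  define H where "H = E - {{u,v}}"
  let ?A = "component (V - S) H ` (V - S)"
  let ?X = "{C \<in> ?A. \<exists>c\<in>C. {c,s} \<in> H}"
  obtain T where "T \<subseteq> ?X" "card T = 3"
    using three obtain_subset_with_card_n[of 3 ?X] unfolding H_def by auto
  then obtain C1 C2 C3 where "T = {C1,C2,C3}" "C1 \<noteq> C2" "C1 \<noteq> C3" "C2 \<noteq> C3"
    unfolding card_3_iff by blast
  with \<open>T \<subseteq> ?X\<close> have C: "C1 \<in> ?X" "C2 \<in> ?X" "C3 \<in> ?X" "C1 \<noteq> C2" "C1 \<noteq> C3" "C2 \<noteq> C3"
    by auto
  then obtain c1 c2 c3 where c: "c1 \<in> C1" "c2 \<in> C2" "c3 \<in> C3" "{c1,s} \<in> H" "{c2,s} \<in> H" "{c3,s} \<in> H"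
    by blast
  have CA: "C1 \<in> ?A" "C2 \<in> ?A" "C3 \<in> ?A" using C by auto
  have witness: ?thesis
    if h: "{ci,cj} = {u,v}" "Ci \<in> ?A" "Cj \<in> ?A" "Ck \<in> ?A" "Ck \<noteq> Ci" "Ck \<noteq> Cj"
      "ci \<in> Ci" "cj \<in> Cj" "d \<in> Ck" "{ci,s} \<in> H" "{cj,s} \<in> H" "{d,s} \<in> H" for ci cj d Ci Cj Ck
  proof -
    have o: "(ci = u \<and> cj = v) \<or> (ci = v \<and> cj = u)" using h(1) by (simp add: doubleton_eq_iff)
    have su: "{s,u} \<in> E" "{s,v} \<in> E" using o h(10,11) unfolding H_def by (auto simp: insert_commute)
    have di: "\<not> reach (V - S) H d ci \<and> d \<noteq> ci" by (rule distinct_components_not_reach[OF h(4,2,5,9,7)])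
    have dj: "\<not> reach (V - S) H d cj \<and> d \<noteq> cj" by (rule distinct_components_not_reach[OF h(4,3,6,9,8)])
    have inU: "d \<in> V - S" "ci \<in> V - S" "cj \<in> V - S"
      using components_mem[OF h(4,9)] components_mem[OF h(2,7)] components_mem[OF h(3,8)] .
    have ndu: "d \<noteq> u" "d \<noteq> v" using o di dj by auto
    have "{d,ci} \<notin> H" "{d,cj} \<notin> H"
      using di dj reach_edge[OF inU(1,2)] reach_edge[OF inU(1,3)] by blast+
    then have "{d,u} \<notin> E" "{d,v} \<notin> E" using o ndu unfolding H_def by (auto simp: doubleton_eq_iff)
    moreover have "{s,d} \<in> E" using h(12) unfolding H_def by (auto simp: insert_commute)
    ultimately show ?thesis using su ndu by blast
  qed
  from claw_free_separated_triple[OF S H_def CA C(4-6) c] show ?thesis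
  proof (elim disjE)
    assume "{c1,c2} = {u,v}"
    from witness[OF this CA(1,2,3) C(5)[symmetric] C(6)[symmetric] c(1,2,3) c(4,5,6)] show ?thesis .
  next
    assume "{c1,c3} = {u,v}"
    from witness[OF this CA(1,3,2) C(4)[symmetric] C(6) c(1,3,2) c(4,6,5)] show ?thesis .
  next
    assume "{c2,c3} = {u,v}"
    from witness[OF this CA(2,3,1) C(4) C(5) c(2,3,1) c(5,6,4)] show ?thesis .
  qed
qed

lemma nonbridge_edge_triangle:
  assumes e: "{u,v} \<in> E" and nonbridge: "reach V (E - {{u,v}}) u v"
  obtains s where "s \<in> V" "{s,u} \<in> E" "{s,v} \<in> E" "\<And>c. {c,u} \<in> E \<Longrightarrow> {c,v} \<in> E \<Longrightarrow> c = s"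
    "\<not> reach (V - {s}) (E - {{u,v}}) u v"
    "\<exists>d. {s,d} \<in> E \<and> d \<noteq> u \<and> d \<noteq> v \<and> {d,u} \<notin> E \<and> {d,v} \<notin> E"
proof -
  obtain S where S: "S \<subseteq> V" "S \<noteq> {}" "u \<notin> S" "v \<notin> S"
    and sparse: "2 * card S < num_comp (V - S) (E - {{u,v}})"
    using sparse_cutset_of_edge_deletion[OF e nonbridge] by blast
  define H where "H = E - {{u,v}}"
  define U where "U = V - S"
  define A where "A = component U H ` U"
  define R where "R C s \<longleftrightarrow> (\<exists>c\<in>C. {c,s} \<in> H)" for C s
  define Cu where "Cu = component U H u"
  define Cv where "Cv = component U H v"
  have uv: "u \<in> U" "v \<in> U" using edgeD[OF e] S unfolding U_def by auto
  have CuA: "Cu \<in> A" "Cv \<in> A" using uv unfolding A_def Cu_def Cv_def by auto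
  have uCu: "u \<in> Cu" using uv component_self unfolding Cu_def by fastforce
  have finS: "finite S" using finite_V S(1) finite_subset by blast
  have finA: "finite A" using finite_V unfolding A_def U_def by simp
  have connH: "\<forall>x\<in>V. \<forall>y\<in>V. reach V H x y"
    using reach_remove_edge[OF nonbridge] reach_V unfolding H_def by blast
  have cover: "\<exists>s\<in>S. R C s" if "C \<in> A" for C
  proof -
    have "C \<in> component (V - S) H ` (V - S)" using that unfolding A_def U_def .
    then obtain c s where "c \<in> C" "s \<in> S" "{c,s} \<in> H"
      using component_adjacent_to_cutset[OF connH S(1,2)] by blast
    then show ?thesis unfolding R_def by blast
  qed
  have bound: "card {C\<in>A. R C s} \<le> (if R Cu s \<and> R Cv s \<and> Cu \<noteq> Cv then 3 else 2)" if "s \<in> S" for s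
    using separator_meets_two_components[OF S(1) that H_def refl] CuA
    unfolding A_def R_def Cu_def Cv_def U_def by simp
  have many: "2 * card S < card A" using sparse unfolding A_def U_def H_def num_comp_eq_card_components .
  obtain s0 where Cuv: "Cu \<noteq> Cv" and s0: "s0 \<in> S" "{s\<in>S. R Cu s} = {s0}" "{s\<in>S. R Cv s} = {s0}"
    and three: "3 \<le> card {C\<in>A. R C s0}"
    by (rule incidences_unique_shared_separator[of A S Cu Cv R, OF finA finS CuA cover bound many])
  have not_uv: "\<not> reach U H u v" using Cuv component_eq_iff[OF uv, of H] unfolding Cu_def Cv_def by simp
  have unique: "c = s0" if cu: "{c,u} \<in> E" and cv: "{c,v} \<in> E" for c
  proof -
    have cuv: "c \<noteq> u" "c \<noteq> v" "c \<in> V" using edgeD[OF cu] edgeD[OF cv] by auto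
    have H: "{u,c} \<in> H" "{c,v} \<in> H" using cu cv cuv unfolding H_def by (auto simp: insert_commute doubleton_eq_iff)
    show ?thesis
    proof (cases "c \<in> S")
      case False
      then have "c \<in> U" using cuv unfolding U_def by blast
      then have "reach U H u v"
        using reach_trans[OF reach_edge[OF uv(1) _ H(1)] reach_edge[OF _ uv(2) H(2)]] by blast
      then show ?thesis using not_uv by simp
    next
      case True
      then have "c \<in> {s\<in>S. R Cu s}" using uCu H(1) unfolding R_def by blast
      then show ?thesis using s0(2) by simp
    qed
  qed
  have separates: "\<not> reach (V - {s0}) (E - {{u,v}}) u v"
  proof
    assume r: "reach (V - {s0}) (E - {{u,v}}) u v"
    \<comment> \<open>s0 is the only vertex of S adjacent to Cu, so a path avoiding s0 stays inside Cu\<close>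
    have "v \<in> Cu"
    proof (rule reach_closed[OF r[folded H_def]])
      show "u \<in> Cu" by (rule uCu)
      fix p q assume pq: "p \<in> Cu" "q \<in> V - {s0}" "{p,q} \<in> H"
      have "q \<notin> S"
      proof
        assume "q \<in> S"
        then have "q \<in> {s\<in>S. R Cu s}" using pq unfolding R_def by blast
        then show False using s0(2) pq(2) by simp
      qed
      then show "q \<in> Cu" using component_step[of p U H u q] pq unfolding Cu_def U_def by blast
    qed
    then have "reach U H u v" unfolding Cu_def component_def by simp
    then show False using not_uv by simp
  qed
  have "3 \<le> card {C \<in> component (V - S) (E - {{u,v}}) ` (V - S). \<exists>c\<in>C. {c,s0} \<in> E - {{u,v}}}"
    using three unfolding A_def R_def U_def H_def .
  from separator_of_three_components[OF S(1) s0(1) this]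
  have sd: "{s0,u} \<in> E" "{s0,v} \<in> E" "\<exists>d. {s0,d} \<in> E \<and> d \<noteq> u \<and> d \<noteq> v \<and> {d,u} \<notin> E \<and> {d,v} \<notin> E"
    by blast+
  have "s0 \<in> V" using s0(1) S(1) by blast
  from that[OF this sd(1,2) unique separates sd(3)] show ?thesis .
qed

definition bare_edge :: "'a \<Rightarrow> 'a \<Rightarrow> bool" where
  "bare_edge a b \<longleftrightarrow> {a,b} \<in> E \<and> \<not> (\<exists>c. {c,a} \<in> E \<and> {c,b} \<in> E)"

lemma bare_edge_sym: "bare_edge a b \<Longrightarrow> bare_edge b a" unfolding bare_edge_def by (auto simp: insert_commute)

lemma bare_edge_bridge: "bare_edge u v \<Longrightarrow> \<not> reach V (E - {{u,v}}) u v"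
proof
  assume n: "bare_edge u v" and r: "reach V (E - {{u,v}}) u v"
  have e: "{u,v} \<in> E" using n unfolding bare_edge_def by blast
  obtain s where "{s,u} \<in> E" "{s,v} \<in> E" using nonbridge_edge_triangle[OF e r] by blast
  then show False using n unfolding bare_edge_def by blast
qed

lemma triangle_edge_props:
  assumes e: "{u,v} \<in> E" and c: "{c,u} \<in> E" "{c,v} \<in> E"
  shows "(\<forall>c'. {c',u} \<in> E \<longrightarrow> {c',v} \<in> E \<longrightarrow> c' = c) \<and> \<not> reach (V - {c}) (E - {{u,v}}) u v
     \<and> (\<exists>d. {c,d} \<in> E \<and> d \<noteq> u \<and> d \<noteq> v \<and> {d,u} \<notin> E \<and> {d,v} \<notin> E)"
proof -
  have cuv: "c \<noteq> u" "c \<noteq> v" "c \<in> V" "u \<in> V" "v \<in> V" using edgeD[OF c(1)] edgeD[OF c(2)] by auto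
  have "{u,c} \<in> E - {{u,v}}" using c cuv by (auto simp: insert_commute doubleton_eq_iff)
  moreover have "{c,v} \<in> E - {{u,v}}" using c cuv by (auto simp: doubleton_eq_iff)
  ultimately have r: "reach V (E - {{u,v}}) u v"
    using reach_edge[OF cuv(4) cuv(3)] reach_edge[OF cuv(3) cuv(5)] reach_trans by metis
  show ?thesis
  proof (rule nonbridge_edge_triangle[OF e r])
    fix s assume s: "s \<in> V" "{s,u} \<in> E" "{s,v} \<in> E"
      "\<And>c. {c,u} \<in> E \<Longrightarrow> {c,v} \<in> E \<Longrightarrow> c = s" "\<not> reach (V - {s}) (E - {{u,v}}) u v"
      "\<exists>d. {s,d} \<in> E \<and> d \<noteq> u \<and> d \<noteq> v \<and> {d,u} \<notin> E \<and> {d,v} \<notin> E"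
    have "c = s" using s(4) c .
    then show ?thesis using s by blast
  qed
qed

definition triangles :: "'a set set" where
  "triangles = {t. \<exists>a b c. t = {a,b,c} \<and> {a,b} \<in> E \<and> {b,c} \<in> E \<and> {a,c} \<in> E}"

lemma triangleI: "{a,b} \<in> E \<Longrightarrow> {c,a} \<in> E \<Longrightarrow> {c,b} \<in> E \<Longrightarrow> {a,b,c} \<in> triangles"
  unfolding triangles_def by (auto simp: insert_commute)

lemma triangle_decomp:
  assumes t: "t \<in> triangles" and x: "x \<in> t"
  shows "\<exists>y z. t = {x,y,z} \<and> x \<noteq> y \<and> x \<noteq> z \<and> y \<noteq> z \<and> {x,y} \<in> E \<and> {x,z} \<in> E \<and> {y,z} \<in> E"
proof -
  obtain a b c where abc: "t = {a,b,c}" "{a,b} \<in> E" "{b,c} \<in> E" "{a,c} \<in> E" using t unfolding triangles_def by blast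
  have d: "a \<noteq> b" "b \<noteq> c" "a \<noteq> c" using edgeD abc by blast+
  have "x = a \<or> x = b \<or> x = c" using x abc by auto
  then show ?thesis
  proof (elim disjE)
    assume "x = a" then show ?thesis using abc d by blast
  next
    assume "x = b" then show ?thesis using abc d by (intro exI[of _ a] exI[of _ c]) (auto simp: insert_commute)
  next
    assume "x = c" then show ?thesis using abc d by (intro exI[of _ a] exI[of _ b]) (auto simp: insert_commute)
  qed
qed

lemma triangle_subset: "t \<in> triangles \<Longrightarrow> t \<subseteq> V"
  unfolding triangles_def using edgeD by blast

lemma card_triangle: "t \<in> triangles \<Longrightarrow> card t = 3"
proof -
  assume t: "t \<in> triangles"
  obtain a b c where abc: "t = {a,b,c}" "{a,b} \<in> E" "{b,c} \<in> E" "{a,c} \<in> E" using t unfolding triangles_def by blast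
  have d: "a \<noteq> b" "b \<noteq> c" "a \<noteq> c" using edgeD abc by blast+
  then show ?thesis using abc by simp
qed

lemma triangle_edge:
  assumes t: "t \<in> triangles" and "x \<in> t" "y \<in> t" "x \<noteq> y"
  shows "{x,y} \<in> E"
proof -
  obtain a b c where abc: "t = {a,b,c}" "{a,b} \<in> E" "{b,c} \<in> E" "{a,c} \<in> E" using t unfolding triangles_def by blast
  then show ?thesis using assms by (auto simp: insert_commute)
qed

lemma triangles_eq:
  assumes t: "t1 \<in> triangles" "t2 \<in> triangles" and xy: "x \<noteq> y" "x \<in> t1" "y \<in> t1" "x \<in> t2" "y \<in> t2"
  shows "t1 = t2"
proof -
  have exy: "{x,y} \<in> E" using triangle_edge[OF t(1) xy(2,3,1)] .
  have third: "\<exists>w. w \<in> t \<and> w \<noteq> x \<and> w \<noteq> y" if "t \<in> triangles" for t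
  proof -
    have "card t = 3" using card_triangle[OF that] .
    moreover have "card {x,y} = 2" using xy by simp
    moreover have "t \<subseteq> {x,y} \<Longrightarrow> card t \<le> card {x,y}" by (rule card_mono) auto
    ultimately have "\<not> t \<subseteq> {x,y}" by linarith
    then show ?thesis by blast
  qed
  have cn: "{z,x} \<in> E \<and> {z,y} \<in> E" if "t \<in> triangles" "x \<in> t" "y \<in> t" "z \<in> t" "z \<noteq> x" "z \<noteq> y" for t z
    using triangle_edge[OF that(1)] that by blast
  have sub: "ta \<subseteq> tb" if ab: "ta \<in> triangles" "tb \<in> triangles" "x \<in> ta" "y \<in> ta" "x \<in> tb" "y \<in> tb" for ta tb
  proof
    fix z assume z: "z \<in> ta"
    show "z \<in> tb"
    proof (cases "z = x \<or> z = y")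
      case True then show ?thesis using ab by blast
    next
      case False
      obtain w where w: "w \<in> tb" "w \<noteq> x" "w \<noteq> y" using third[OF ab(2)] by blast
      have "{z,x} \<in> E" "{z,y} \<in> E" using cn[OF ab(1,3,4) z] False by blast+
      moreover have "{w,x} \<in> E" "{w,y} \<in> E" using cn[OF ab(2,5,6) w(1)] w by blast+
      ultimately have "z = w" using triangle_edge_props[OF exy] by blast
      then show ?thesis using w by simp
    qed
  qed
  show ?thesis using sub[OF t(1,2) xy(2-5)] sub[OF t(2,1) xy(4,5,2,3)] by blast
qed

lemma finite_triangles: "finite triangles"
proof -
  have "triangles \<subseteq> Pow V" using triangle_subset by blast
  then show ?thesis using finite_V by (meson finite_Pow_iff finite_subset)
qed

definition TV :: "('a + 'a set) set" where "TV = Inl ` V \<union> Inr ` triangles"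

definition TE :: "('a + 'a set) set set" where
  "TE = {{Inl a, Inl b} | a b. bare_edge a b} \<union> {{Inr t, Inl a} | t a. t \<in> triangles \<and> a \<in> t}"

lemma TE_Inl_Inl: "{Inl a, Inl b} \<in> TE \<longleftrightarrow> bare_edge a b"
proof
  assume "{Inl a, Inl b} \<in> TE"
  then have "\<exists>a' b'. {Inl a, Inl b} = {Inl a', Inl b'} \<and> bare_edge a' b'" unfolding TE_def by (auto simp: doubleton_eq_iff)
  then obtain a' b' where h: "{Inl a, Inl b} = {Inl a', (Inl b' :: 'a + 'a set)}" "bare_edge a' b'" by blast
  then have "(a = a' \<and> b = b') \<or> (a = b' \<and> b = a')" by (auto simp: doubleton_eq_iff)
  then show "bare_edge a b" using h(2) bare_edge_sym by blast
next
  assume "bare_edge a b" then show "{Inl a, Inl b} \<in> TE" unfolding TE_def by blast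
qed

lemma TE_Inr_Inl: "{Inr t, Inl a} \<in> TE \<longleftrightarrow> t \<in> triangles \<and> a \<in> t"
proof
  assume "{Inr t, Inl a} \<in> TE"
  then show "t \<in> triangles \<and> a \<in> t" unfolding TE_def by (auto simp: doubleton_eq_iff)
next
  assume "t \<in> triangles \<and> a \<in> t" then show "{Inr t, Inl a} \<in> TE" unfolding TE_def by blast
qed

lemma TE_Inl_Inr: "{Inl a, Inr t} \<in> TE \<longleftrightarrow> t \<in> triangles \<and> a \<in> t"
  using TE_Inr_Inl by (simp add: insert_commute)

lemma TE_Inr_Inr: "{Inr t, Inr t'} \<notin> TE"
  unfolding TE_def by (auto simp: doubleton_eq_iff)

lemma TE_cases:
  assumes "e \<in> TE"
  shows "(\<exists>a b. e = {Inl a, Inl b} \<and> bare_edge a b) \<or> (\<exists>t a. e = {Inr t, Inl a} \<and> t \<in> triangles \<and> a \<in> t)"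
  using assms unfolding TE_def by blast

lemma TE_Inr_nbr:
  assumes "{x, Inr t} \<in> TE"
  shows "\<exists>a. x = Inl a \<and> t \<in> triangles \<and> a \<in> t"
proof (cases x)
  case (Inl a) then show ?thesis using assms TE_Inl_Inr by blast
next
  case (Inr t') then show ?thesis using assms TE_Inr_Inr by blast
qed

lemma TE_Inl_nbr:
  assumes "{x, Inl a} \<in> TE"
  shows "(\<exists>b. x = Inl b \<and> bare_edge b a) \<or> (\<exists>t. x = Inr t \<and> t \<in> triangles \<and> a \<in> t)"
proof (cases x)
  case (Inl b) then show ?thesis using assms TE_Inl_Inl by blast
next
  case (Inr t) then show ?thesis using assms TE_Inr_Inl by blast
qed

lemma bare_edgeD: "bare_edge a b \<Longrightarrow> {a,b} \<in> E" unfolding bare_edge_def by blast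

lemma TE_edgeD: "e \<in> TE \<Longrightarrow> e \<subseteq> TV \<and> card e = 2"
proof -
  assume "e \<in> TE"
  from TE_cases[OF this] show ?thesis
  proof
    assume "\<exists>a b. e = {Inl a, Inl b} \<and> bare_edge a b"
    then obtain a b where h: "e = {Inl a, Inl b}" "bare_edge a b" by blast
    then have "a \<noteq> b" "a \<in> V" "b \<in> V" using edgeD bare_edgeD by blast+
    then show ?thesis using h unfolding TV_def by auto
  next
    assume "\<exists>t a. e = {Inr t, Inl a} \<and> t \<in> triangles \<and> a \<in> t"
    then obtain t a where h: "e = {Inr t, Inl a}" "t \<in> triangles" "a \<in> t" by blast
    then have "a \<in> V" using triangle_subset by blast
    then show ?thesis using h unfolding TV_def by auto
  qed
qed

lemma graph_T: "graph TV TE"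
  unfolding graph_def using TE_edgeD finite_V finite_triangles unfolding TV_def by blast

lemma card_TV: "card TV \<ge> 3"
proof -
  have "card (Inl ` V :: ('a + 'a set) set) = card V" by (simp add: card_image)
  moreover have "finite TV" unfolding TV_def using finite_V finite_triangles by simp
  moreover have "Inl ` V \<subseteq> TV" unfolding TV_def by blast
  ultimately have "card (Inl ` V :: ('a + 'a set) set) \<le> card TV" using card_mono by metis
  then show ?thesis using card_V_ge_3 \<open>card (Inl ` V :: ('a + 'a set) set) = card V\<close> by linarith
qed

lemma reach_TV: "\<forall>x\<in>TV. \<forall>y\<in>TV. reach TV TE x y"
proof -
  have step: "reach TV TE (Inl a) (Inl b)" if "reach V E a b" "a \<in> V" for a b
    using that(1)
  proof (induction rule: reach_induct)
    case base then show ?case by simp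
  next
    case (step y z)
    show ?case
    proof (cases "\<exists>c. {c,y} \<in> E \<and> {c,z} \<in> E")
      case False
      then have "bare_edge y z" using \<open>{y,z} \<in> E\<close> unfolding bare_edge_def by blast
      then have "{Inl y, Inl z} \<in> TE" using TE_Inl_Inl by blast
      moreover have "Inl y \<in> TV" "Inl z \<in> TV" using step unfolding TV_def by auto
      ultimately show ?thesis using reach_step[OF step.IH] by blast
    next
      case True
      then obtain c where c: "{c,y} \<in> E" "{c,z} \<in> E" by blast
      have t: "{y,z,c} \<in> triangles" using triangleI[OF \<open>{y,z} \<in> E\<close> c] .
      have e1: "{Inl y, Inr {y,z,c}} \<in> TE" using TE_Inl_Inr t by simp
      have e2: "{Inr {y,z,c}, Inl z} \<in> TE" using TE_Inr_Inl t by simp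
      have m: "Inl y \<in> TV" "Inl z \<in> TV" "Inr {y,z,c} \<in> TV" using step t unfolding TV_def by auto
      have "reach TV TE (Inl a) (Inr {y,z,c})" using reach_step[OF step.IH m(1) m(3) e1] .
      then show ?thesis using reach_step[OF _ m(3) m(2) e2] by blast
    qed
  qed
  obtain a0 where a0: "a0 \<in> V" using card_V_ge_3 by fastforce
  have toa0: "reach TV TE (Inl a0) x" if "x \<in> TV" for x
  proof -
    from that consider (l) b where "x = Inl b" "b \<in> V" | (r) t where "x = Inr t" "t \<in> triangles"
      unfolding TV_def by blast
    then show ?thesis
    proof cases
      case l then show ?thesis using step reach_V a0 by blast
    next
      case r
      obtain b where b: "b \<in> t" using card_triangle[OF r(2)] by fastforce
      have bV: "b \<in> V" using triangle_subset[OF r(2)] b by blast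
      have "reach TV TE (Inl a0) (Inl b)" using step reach_V a0 bV by blast
      moreover have "{Inl b, Inr t} \<in> TE" using TE_Inl_Inr r b by simp
      moreover have "Inl b \<in> TV" "Inr t \<in> TV" using bV r unfolding TV_def by auto
      ultimately show ?thesis using r reach_step by metis
    qed
  qed
  show ?thesis using toa0 reach_sym reach_trans by metis
qed

lemma connected_T: "connected_graph TV TE"
proof -
  have "finite TV" unfolding TV_def using finite_V finite_triangles by simp
  moreover have "TV \<noteq> {}" using card_TV by auto
  ultimately show ?thesis using connected_graph_iff reach_TV by blast
qed

definition tnbrs :: "('a + 'a set) \<Rightarrow> ('a + 'a set) set" where "tnbrs x = {y. {y,x} \<in> TE}"

lemma degree_T: "degree TE x = card (tnbrs x)" unfolding degree_def tnbrs_def by simp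

lemma finite_TV: "finite TV" unfolding TV_def using finite_V finite_triangles by simp

lemma tnbrs_subset: "tnbrs x \<subseteq> TV" unfolding tnbrs_def using TE_edgeD by blast

lemma finite_tnbrs: "finite (tnbrs x)" using tnbrs_subset finite_TV finite_subset by blast

lemma tnbrs_Inr: "t \<in> triangles \<Longrightarrow> tnbrs (Inr t) = Inl ` t"
proof -
  assume t: "t \<in> triangles"
  show ?thesis
  proof
    show "tnbrs (Inr t) \<subseteq> Inl ` t" unfolding tnbrs_def using TE_Inr_nbr by blast
    show "Inl ` t \<subseteq> tnbrs (Inr t)" unfolding tnbrs_def using TE_Inl_Inr t by auto
  qed
qed

lemma degree_T_Inr: "t \<in> triangles \<Longrightarrow> degree TE (Inr t) = 3"
  unfolding degree_T using tnbrs_Inr card_triangle by (simp add: card_image)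

lemma bare_edge_not_in_triangle: "bare_edge b a \<Longrightarrow> t \<in> triangles \<Longrightarrow> a \<in> t \<Longrightarrow> b \<notin> t"
proof
  assume n: "bare_edge b a" and t: "t \<in> triangles" "a \<in> t" and b: "b \<in> t"
  have ab: "a \<noteq> b" using n bare_edgeD edgeD by blast
  obtain y z where yz: "t = {a,y,z}" "a \<noteq> y" "a \<noteq> z" "y \<noteq> z" "{a,y} \<in> E" "{a,z} \<in> E" "{y,z} \<in> E"
    using triangle_decomp[OF t] by blast
  have "b = y \<or> b = z" using b yz ab by auto
  then show False
  proof
    assume "b = y" then have "{z,b} \<in> E" "{z,a} \<in> E" using yz by (auto simp: insert_commute)
    then show False using n unfolding bare_edge_def by blast
  next
    assume "b = z" then have "{y,b} \<in> E" "{y,a} \<in> E" using yz by (auto simp: insert_commute)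
    then show False using n unfolding bare_edge_def by blast
  qed
qed

lemma tnbrs_Inl_witness:
  assumes "y \<in> tnbrs (Inl a)"
  shows "\<exists>g. {a,g} \<in> E \<and> g \<noteq> a \<and> ((y = Inl g \<and> bare_edge g a) \<or> (\<exists>t. y = Inr t \<and> t \<in> triangles \<and> a \<in> t \<and> g \<in> t))"
proof -
  have "{y, Inl a} \<in> TE" using assms unfolding tnbrs_def by simp
  from TE_Inl_nbr[OF this] show ?thesis
  proof
    assume "\<exists>b. y = Inl b \<and> bare_edge b a"
    then obtain b where b: "y = Inl b" "bare_edge b a" by blast
    have "{b,a} \<in> E" using bare_edgeD[OF b(2)] .
    then have "{a,b} \<in> E" "b \<noteq> a" using edgeD by (auto simp: insert_commute)
    then show ?thesis using b by blast
  next
    assume "\<exists>t. y = Inr t \<and> t \<in> triangles \<and> a \<in> t"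
    then obtain t where t: "y = Inr t" "t \<in> triangles" "a \<in> t" by blast
    obtain g z where "t = {a,g,z}" "a \<noteq> g" "{a,g} \<in> E" using triangle_decomp[OF t(2,3)] by blast
    then show ?thesis using t by blast
  qed
qed

lemma bare_edge_triangle_far:
  assumes "bare_edge g1 a" "t \<in> triangles" "a \<in> t" "g2 \<in> t" "{a,g2} \<in> E"
  shows "g1 \<noteq> g2 \<and> {g1,g2} \<notin> E"
proof -
  have "g1 \<notin> t" by (rule bare_edge_not_in_triangle[OF assms(1-3)])
  moreover have "{g1,g2} \<notin> E"
    using assms(1,5) unfolding bare_edge_def by (auto simp: insert_commute)
  ultimately show ?thesis using assms(4) by blast
qed

lemma triangles_through_vertex_far:
  assumes t: "t1 \<in> triangles" "t2 \<in> triangles" "t1 \<noteq> t2" "a \<in> t1" "a \<in> t2" "g1 \<in> t1" "g2 \<in> t2"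
    and e: "{a,g1} \<in> E" "{a,g2} \<in> E" "g1 \<noteq> a" "g2 \<noteq> a"
  shows "g1 \<noteq> g2 \<and> {g1,g2} \<notin> E"
proof
  show "g1 \<noteq> g2"
  proof
    assume "g1 = g2"
    then have "t1 = t2" using triangles_eq[OF t(1,2) e(3)[symmetric] t(4,6,5)] t(7) by blast
    then show False using t(3) by simp
  qed
  show "{g1,g2} \<notin> E"
  proof
    assume "{g1,g2} \<in> E"
    moreover have "{g2,a} \<in> E" using e(2) by (simp add: insert_commute)
    ultimately have tr: "{a,g1,g2} \<in> triangles" using triangleI[OF e(1), of g2] by (simp add: insert_commute)
    have "{a,g1,g2} = t1" using triangles_eq[OF tr t(1) e(3)[symmetric]] t by auto
    moreover have "{a,g1,g2} = t2" using triangles_eq[OF tr t(2) e(4)[symmetric]] t by auto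
    ultimately show False using t(3) by simp
  qed
qed

lemma tnbrs_Inl_witnesses:
  assumes y1: "y1 = Inl g1 \<and> bare_edge g1 a \<or> (\<exists>t. y1 = Inr t \<and> t \<in> triangles \<and> a \<in> t \<and> g1 \<in> t)"
    and y2: "y2 = Inl g2 \<and> bare_edge g2 a \<or> (\<exists>t. y2 = Inr t \<and> t \<in> triangles \<and> a \<in> t \<and> g2 \<in> t)"
    and e: "{a,g1} \<in> E" "{a,g2} \<in> E" "g1 \<noteq> a" "g2 \<noteq> a" and ne: "y1 \<noteq> y2"
  shows "g1 \<noteq> g2 \<and> {g1,g2} \<notin> E"
  using y1
proof (elim disjE exE conjE)
  assume h1: "y1 = Inl g1" "bare_edge g1 a"
  from y2 show ?thesis
  proof (elim disjE exE conjE)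
    assume "y2 = Inl g2" "bare_edge g2 a"
    then have "g1 \<noteq> g2" using h1(1) ne by blast
    moreover have "{g1,g2} \<notin> E" using h1(2) e(2) unfolding bare_edge_def by (auto simp: insert_commute)
    ultimately show ?thesis ..
  next
    fix t assume "y2 = Inr t" "t \<in> triangles" "a \<in> t" "g2 \<in> t"
    from bare_edge_triangle_far[OF h1(2) this(2-4) e(2)] show ?thesis .
  qed
next
  fix t1 assume t1: "y1 = Inr t1" "t1 \<in> triangles" "a \<in> t1" "g1 \<in> t1"
  from y2 show ?thesis
  proof (elim disjE exE conjE)
    assume "y2 = Inl g2" "bare_edge g2 a"
    from bare_edge_triangle_far[OF this(2) t1(2-4) e(1)] show ?thesis by (auto simp: insert_commute)
  next
    fix t2 assume t2: "y2 = Inr t2" "t2 \<in> triangles" "a \<in> t2" "g2 \<in> t2"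
    have "t1 \<noteq> t2" using t1(1) t2(1) ne by blast
    from triangles_through_vertex_far[OF t1(2) t2(2) this t1(3) t2(3) t1(4) t2(4) e] show ?thesis .
  qed
qed

lemma degree_T_Inl_le_2: "degree TE (Inl a) \<le> 2"
  unfolding degree_T
proof (rule card_le_2_if_no_three_distinct[OF finite_tnbrs])
  fix y1 y2 y3 assume y: "y1 \<in> tnbrs (Inl a)" "y2 \<in> tnbrs (Inl a)" "y3 \<in> tnbrs (Inl a)" "y1 \<noteq> y2" "y1 \<noteq> y3" "y2 \<noteq> y3"
  obtain g1 where g1: "{a,g1} \<in> E" "g1 \<noteq> a" "(y1 = Inl g1 \<and> bare_edge g1 a) \<or> (\<exists>t. y1 = Inr t \<and> t \<in> triangles \<and> a \<in> t \<and> g1 \<in> t)"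
    using tnbrs_Inl_witness[OF y(1)] by blast
  obtain g2 where g2: "{a,g2} \<in> E" "g2 \<noteq> a" "(y2 = Inl g2 \<and> bare_edge g2 a) \<or> (\<exists>t. y2 = Inr t \<and> t \<in> triangles \<and> a \<in> t \<and> g2 \<in> t)"
    using tnbrs_Inl_witness[OF y(2)] by blast
  obtain g3 where g3: "{a,g3} \<in> E" "g3 \<noteq> a" "(y3 = Inl g3 \<and> bare_edge g3 a) \<or> (\<exists>t. y3 = Inr t \<and> t \<in> triangles \<and> a \<in> t \<and> g3 \<in> t)"
    using tnbrs_Inl_witness[OF y(3)] by blast
  have p12: "g1 \<noteq> g2 \<and> {g1,g2} \<notin> E" by (rule tnbrs_Inl_witnesses[OF g1(3) g2(3) g1(1) g2(1) g1(2) g2(2) y(4)])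
  have p13: "g1 \<noteq> g3 \<and> {g1,g3} \<notin> E" by (rule tnbrs_Inl_witnesses[OF g1(3) g3(3) g1(1) g3(1) g1(2) g3(2) y(5)])
  have p23: "g2 \<noteq> g3 \<and> {g2,g3} \<notin> E" by (rule tnbrs_Inl_witnesses[OF g2(3) g3(3) g2(1) g3(1) g2(2) g3(2) y(6)])
  have V: "a \<in> V" "g1 \<in> V" "g2 \<in> V" "g3 \<in> V" using edgeD g1(1) g2(1) g3(1) by blast+
  have "distinct [a, g1, g2, g3]" using p12 p13 p23 g1(2) g2(2) g3(2) by auto
  then show False using cf V g1(1) g2(1) g3(1) p12 p13 p23 unfolding claw_free_def by blast
qed

lemma degree_T_Inl_triangle:
  assumes t: "t \<in> triangles" "a \<in> t"
  shows "degree TE (Inl a) = 2"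
proof -
  obtain b c where bc: "t = {a,b,c}" "a \<noteq> b" "a \<noteq> c" "b \<noteq> c" "{a,b} \<in> E" "{a,c} \<in> E" "{b,c} \<in> E"
    using triangle_decomp[OF t] by blast
  have "{a,b} \<in> E" "{a,c} \<in> E" using bc by auto
  then have "{a,b} \<in> E" "{a,c} \<in> E" by auto
  from triangle_edge_props[OF bc(7), of a] bc(5,6) obtain d where d: "{a,d} \<in> E" "d \<noteq> b" "d \<noteq> c" "{d,b} \<notin> E" "{d,c} \<notin> E"
    by (auto simp: insert_commute)
  have da: "d \<noteq> a" using edgeD[OF d(1)] by auto
  have dnt: "d \<notin> t" using bc d da by auto
  have r1: "Inr t \<in> tnbrs (Inl a)" unfolding tnbrs_def using TE_Inr_Inl t by simp
  have "\<exists>y. y \<in> tnbrs (Inl a) \<and> y \<noteq> Inr t"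
  proof (cases "bare_edge d a")
    case True
    then have "Inl d \<in> tnbrs (Inl a)" unfolding tnbrs_def using TE_Inl_Inl by simp
    then show ?thesis by blast
  next
    case False
    then obtain c' where c': "{c',d} \<in> E" "{c',a} \<in> E" using d(1) unfolding bare_edge_def by (auto simp: insert_commute)
    have t': "{d,a,c'} \<in> triangles" using triangleI[of d a c'] d(1) c' by (simp add: insert_commute)
    then have "Inr {d,a,c'} \<in> tnbrs (Inl a)" unfolding tnbrs_def using TE_Inr_Inl by simp
    moreover have "{d,a,c'} \<noteq> t" using dnt by auto
    ultimately show ?thesis by blast
  qed
  then obtain y where y: "y \<in> tnbrs (Inl a)" "y \<noteq> Inr t" by blast
  have "card {Inr t, y} = 2" using y by simp
  moreover have "{Inr t, y} \<subseteq> tnbrs (Inl a)" using y r1 by simp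
  ultimately have "card (tnbrs (Inl a)) \<ge> 2" using card_mono[OF finite_tnbrs] by metis
  moreover have "card (tnbrs (Inl a)) \<le> 2" using degree_T_Inl_le_2[of a] unfolding degree_T .
  ultimately show ?thesis unfolding degree_T by linarith
qed

lemma degree_T_le_3: "\<forall>v\<in>TV. degree TE v \<le> 3"
proof
  fix v assume "v \<in> TV"
  then consider (l) a where "v = Inl a" | (r) t where "v = Inr t" "t \<in> triangles" unfolding TV_def by blast
  then show "degree TE v \<le> 3"
  proof cases
    case l then show ?thesis using degree_T_Inl_le_2[of a] by simp
  next
    case r then show ?thesis using degree_T_Inr by simp
  qed
qed

lemma deg3_T: "deg3 TV TE = Inr ` triangles"
proof
  show "deg3 TV TE \<subseteq> Inr ` triangles"
  proof
    fix v assume "v \<in> deg3 TV TE"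
    then have v: "v \<in> TV" "degree TE v = 3" unfolding deg3_def by auto
    show "v \<in> Inr ` triangles"
    proof (cases v)
      case (Inl a) then show ?thesis using v(2) degree_T_Inl_le_2[of a] by simp
    next
      case (Inr t) then show ?thesis using v(1) unfolding TV_def by auto
    qed
  qed
  show "Inr ` triangles \<subseteq> deg3 TV TE" unfolding deg3_def TV_def using degree_T_Inr by auto
qed

lemma construct_V_T: "construct_V TV TE = Inl ` V"
  unfolding construct_V_def deg3_T unfolding TV_def by auto

lemma construct_E_T: "construct_E TV TE = (`) Inl ` E"
proof
  show "construct_E TV TE \<subseteq> (`) Inl ` E"
  proof
    fix e assume e: "e \<in> construct_E TV TE"
    have "(e \<in> TE \<and> e \<inter> Inr ` triangles = {}) \<or>
      (\<exists>x y. e = {x,y} \<and> x \<noteq> y \<and> (\<exists>w\<in>Inr ` triangles. {x,w} \<in> TE \<and> {y,w} \<in> TE))"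
      using e unfolding construct_E_def deg3_T by blast
    then show "e \<in> (`) Inl ` E"
    proof
      assume h: "e \<in> TE \<and> e \<inter> Inr ` triangles = {}"
      have eE: "e \<in> TE" using h by blast
      from TE_cases[OF eE] show ?thesis
      proof
        assume "\<exists>a b. e = {Inl a, Inl b} \<and> bare_edge a b"
        then obtain a b where ab: "e = {Inl a, Inl b}" "bare_edge a b" by blast
        have "{a,b} \<in> E" using bare_edgeD[OF ab(2)] .
        moreover have "e = Inl ` {a,b}" using ab(1) by simp
        ultimately show ?thesis by blast
      next
        assume "\<exists>t a. e = {Inr t, Inl a} \<and> t \<in> triangles \<and> a \<in> t"
        then show ?thesis using h by blast
      qed
    next
      assume "\<exists>x y. e = {x,y} \<and> x \<noteq> y \<and> (\<exists>w\<in>Inr ` triangles. {x,w} \<in> TE \<and> {y,w} \<in> TE)"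
      then obtain x y t where h: "e = {x,y}" "x \<noteq> y" "t \<in> triangles" "{x, Inr t} \<in> TE" "{y, Inr t} \<in> TE" by blast
      obtain p where p: "x = Inl p" "p \<in> t" using TE_Inr_nbr[OF h(4)] by blast
      obtain q where q: "y = Inl q" "q \<in> t" using TE_Inr_nbr[OF h(5)] by blast
      have "p \<noteq> q" using h(2) p q by blast
      then have "{p,q} \<in> E" using triangle_edge[OF h(3) p(2) q(2)] by simp
      moreover have "e = Inl ` {p,q}" using h(1) p q by simp
      ultimately show ?thesis by blast
    qed
  qed
next
  show "(`) Inl ` E \<subseteq> construct_E TV TE"
  proof
    fix e' :: "('a + 'a set) set" assume "e' \<in> (`) Inl ` E"
    then obtain e where e: "e \<in> E" "e' = Inl ` e" by blast
    then obtain a b where ab: "e = {a,b}" "a \<noteq> b" using g unfolding graph_def by (meson card_2_iff)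
    show "e' \<in> construct_E TV TE"
    proof (cases "bare_edge a b")
      case True
      then have "{Inl a, Inl b} \<in> TE" using TE_Inl_Inl by simp
      moreover have "{Inl a, Inl b} \<inter> Inr ` triangles = {}" by auto
      ultimately show ?thesis using e ab unfolding construct_E_def deg3_T by auto
    next
      case False
      then obtain c where c: "{c,a} \<in> E" "{c,b} \<in> E" using e ab unfolding bare_edge_def by blast
      have t: "{a,b,c} \<in> triangles" using triangleI[OF _ c] e ab by simp
      have "{Inl a, Inr {a,b,c}} \<in> TE" "{Inl b, Inr {a,b,c}} \<in> TE" using TE_Inl_Inr t by auto
      moreover have "Inl a \<noteq> (Inl b :: 'a + 'a set)" using ab by simp
      ultimately have "{Inl a, Inl b} \<in> construct_E TV TE"
        unfolding construct_E_def deg3_T using t by blast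
      then show ?thesis using e ab by simp
    qed
  qed
qed

lemma degree_T_1_unique_nbr:
  assumes pq: "bare_edge p q" "degree TE (Inl p) = 1" and pz: "{p,z} \<in> E"
  shows "z = q"
proof -
  have qn: "Inl q \<in> tnbrs (Inl p)" unfolding tnbrs_def using TE_Inl_Inl bare_edge_sym[OF pq(1)] by simp
  have "card (tnbrs (Inl p)) = 1" using pq(2) degree_T by simp
  then obtain w where "tnbrs (Inl p) = {w}" by (meson card_1_singletonE)
  with qn have one: "tnbrs (Inl p) = {Inl q}" by simp
  show "z = q"
  proof (cases "bare_edge z p")
    case True
    then have "Inl z \<in> tnbrs (Inl p)" unfolding tnbrs_def using TE_Inl_Inl by simp
    then show ?thesis using one by simp
  next
    case False
    then obtain c where c: "{c,z} \<in> E" "{c,p} \<in> E" using pz unfolding bare_edge_def by (auto simp: insert_commute)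
    have "{p,z,c} \<in> triangles" using triangleI[OF pz] c by (simp add: insert_commute)
    then have "Inr {p,z,c} \<in> tnbrs (Inl p)" unfolding tnbrs_def using TE_Inr_Inl by simp
    then show ?thesis using one by simp
  qed
qed

lemma independent_T: "independent TE {v \<in> TV. degree TE v = 1 \<or> degree TE v = 3}"
  unfolding independent_def
proof (intro ballI notI)
  fix x y assume x: "x \<in> {v \<in> TV. degree TE v = 1 \<or> degree TE v = 3}"
    and y: "y \<in> {v \<in> TV. degree TE v = 1 \<or> degree TE v = 3}" and xy: "{x,y} \<in> TE"
  from TE_cases[OF xy] show False
  proof (elim disjE exE conjE)
    fix t a assume h: "{x,y} = {Inr t, Inl a}" "t \<in> triangles" "a \<in> t"
    have "Inl a \<in> {x,y}" using h(1) by simp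
    then have "degree TE (Inl a) = 1 \<or> degree TE (Inl a) = 3" using x y by auto
    then show False using degree_T_Inl_triangle[OF h(2,3)] by simp
  next
    fix a b assume h: "{x,y} = {Inl a, Inl b}" "bare_edge a b"
    have "Inl a \<in> {x,y}" "Inl b \<in> {x,y}" using h(1) by auto
    then have d: "degree TE (Inl a) = 1" "degree TE (Inl b) = 1"
      using x y degree_T_Inl_le_2[of a] degree_T_Inl_le_2[of b] by auto
    have aV: "a \<in> V" using bare_edgeD[OF h(2)] edgeD by blast
    \<comment> \<open>two adjacent leaves of T would make G a single edge\<close>
    have "V \<subseteq> {a,b}"
    proof
      fix z assume "z \<in> V"
      then have "reach V E a z" using reach_V aV by blast
      then show "z \<in> {a,b}"
      proof (rule reach_closed)
        fix p q assume "p \<in> {a,b}" "{p,q} \<in> E"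
        then show "q \<in> {a,b}"
          using degree_T_1_unique_nbr[OF h(2) d(1)] degree_T_1_unique_nbr[OF bare_edge_sym[OF h(2)] d(2)]
          by blast
      qed simp
    qed
    then have "card V \<le> card {a,b}" by (intro card_mono) auto
    also have "\<dots> \<le> 2" by (simp add: card_insert_if)
    finally have "card V \<le> 2" .
    then show False using card_V_ge_3 by simp
  qed
qed

text \<open>T is acyclic: a cycle through a bare edge ab yields a path from a to b in G - ab, although
  bare edges are bridges; a cycle through a triangle vertex leaves it at two corners p, q and
  yields a path from p to q in G - pq avoiding the third corner, which separates them.\<close>

lemma T_path_reach:
  assumes r: "RT\<^sup>*\<^sup>* (Inl x) Y"
    and A1: "\<And>p q. RT p q \<Longrightarrow> {p,q} \<in> TE \<and> p \<in> W \<and> q \<in> W"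
    and A2: "\<And>p q. RT (Inl p) (Inl q) \<Longrightarrow> {p,q} \<noteq> e"
    and A3: "\<And>t. Inr t \<in> W \<Longrightarrow> t \<in> triangles \<Longrightarrow> \<not> e \<subseteq> t"
    and Ug: "\<And>p. Inl p \<in> W \<Longrightarrow> p \<in> Ug" and x: "x \<in> Ug"
  shows "(\<forall>y. Y = Inl y \<longrightarrow> reach Ug (E - {e}) x y) \<and> (\<forall>t. Y = Inr t \<longrightarrow> (\<forall>p\<in>t \<inter> Ug. reach Ug (E - {e}) x p))"
  using r
proof (induction rule: rtranclp_induct)
  case base then show ?case by simp
next
  case (step Y Z)
  have a1: "{Y,Z} \<in> TE" "Y \<in> W" "Z \<in> W" using A1[OF step.hyps(2)] by auto
  show ?case
  proof (cases Y)
    case (Inl y)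
    have ry: "reach Ug (E - {e}) x y" using step.IH Inl by simp
    have yU: "y \<in> Ug" using Ug a1(2) Inl by simp
    show ?thesis
    proof (cases Z)
      case (Inl z)
      have "bare_edge y z" using a1(1) \<open>Y = Inl y\<close> Inl TE_Inl_Inl by simp
      then have "{y,z} \<in> E" using bare_edgeD by blast
      moreover have "{y,z} \<noteq> e" using A2 step.hyps(2) \<open>Y = Inl y\<close> Inl by blast
      moreover have "z \<in> Ug" using Ug a1(3) Inl by simp
      ultimately have "reach Ug (E - {e}) x z" using reach_step[OF ry yU] by blast
      then show ?thesis using Inl by simp
    next
      case (Inr t)
      have t: "t \<in> triangles" "y \<in> t" using a1(1) \<open>Y = Inl y\<close> Inr TE_Inl_Inr by auto
      have ne: "\<not> e \<subseteq> t" using A3 a1(3) Inr t(1) by blast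
      have "reach Ug (E - {e}) x p" if p: "p \<in> t" "p \<in> Ug" for p
      proof (cases "p = y")
        case True then show ?thesis using ry by simp
      next
        case False
        have "{y,p} \<in> E" using triangle_edge[OF t(1) t(2) p(1)] False by simp
        moreover have "{y,p} \<noteq> e" using ne t(2) p(1) by blast
        ultimately show ?thesis using reach_step[OF ry yU p(2)] by blast
      qed
      then show ?thesis using Inr by blast
    qed
  next
    case (Inr t)
    show ?thesis
    proof (cases Z)
      case (Inl z)
      have "t \<in> triangles" "z \<in> t" using a1(1) \<open>Y = Inr t\<close> Inl TE_Inr_Inl by auto
      moreover have "z \<in> Ug" using Ug a1(3) Inl by simp
      ultimately show ?thesis using step.IH \<open>Y = Inr t\<close> Inl by simp
    next
      case (Inr t')
      then show ?thesis using a1(1) \<open>Y = Inr t\<close> TE_Inr_Inr by simp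
    qed
  qed
qed

abbreviation "T_adj \<equiv> (\<lambda>x y. {x,y} \<in> TE)"

lemma cycle_list_split:
  assumes c: "cycle_list T_adj L"
  obtains x0 x1 rest where "L = x0 # x1 # rest" "rest \<noteq> []" "distinct (x0 # x1 # rest)"
    "successively T_adj (x1 # rest)" "T_adj x0 x1" "T_adj (last (x1 # rest)) x0"
    "x0 \<notin> set (x1 # rest)" "last (x1 # rest) \<noteq> x1"
proof -
  obtain x0 x1 rest where L: "L = x0 # x1 # rest" using c unfolding cycle_list_def
    by (metis One_nat_def Suc_1 Suc_le_length_iff le_trans numeral_3_eq_3 le_SucI)
  have r: "rest \<noteq> []" using c L unfolding cycle_list_def by auto
  have d: "distinct (x0 # x1 # rest)" using c L unfolding cycle_list_def by simp
  have s: "successively T_adj (x0 # x1 # rest)" using c L unfolding cycle_list_def by simp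
  have cl: "T_adj (last (x1 # rest)) x0" using c L unfolding cycle_list_def by simp
  have "last (x1 # rest) \<in> set rest" using r by simp
  then have "last (x1 # rest) \<noteq> x1" using d by auto
  then show ?thesis using that L r d s cl by auto
qed

lemma no_cycle_T_Inl:
  assumes c: "cycle_list T_adj L" and sub: "set L \<subseteq> TV" and h: "hd L = Inl a" "L ! 1 = Inl b"
  shows False
proof -
  obtain x0 x1 rest where p: "L = x0 # x1 # rest" "rest \<noteq> []" "distinct (x0 # x1 # rest)"
    "successively T_adj (x1 # rest)" "T_adj x0 x1" "T_adj (last (x1 # rest)) x0"
    "x0 \<notin> set (x1 # rest)" "last (x1 # rest) \<noteq> x1" using cycle_list_split[OF c] by blast
  have x01: "x0 = Inl a" "x1 = Inl b" using h p(1) by auto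
  have ntab: "bare_edge a b" using p(5) x01 TE_Inl_Inl by simp
  have br: "\<not> reach V (E - {{a,b}}) a b" by (rule bare_edge_bridge[OF ntab])
  define W where "W = set (x1 # rest)"
  define RT where "RT p q \<longleftrightarrow> T_adj p q \<and> p \<in> W \<and> q \<in> W" for p q
  have sRT: "successively RT (x1 # rest)" using p(4) unfolding RT_def W_def
    by (rule successively_mono) auto
  have rr: "RT\<^sup>*\<^sup>* x1 (last (x1 # rest))" using successively_rtranclp[OF sRT] by simp
  have aW: "Inl a \<notin> W" using p(7) x01 unfolding W_def by simp
  have bV: "b \<in> V" using ntab bare_edgeD edgeD by blast
  have WV: "p \<in> V" if "Inl p \<in> W" for p using that sub p(1) unfolding W_def TV_def by auto
  have tr: "(\<forall>y. Y = Inl y \<longrightarrow> reach V (E - {{a,b}}) b y) \<and> (\<forall>t. Y = Inr t \<longrightarrow> (\<forall>p\<in>t \<inter> V. reach V (E - {{a,b}}) b p))"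
    if "RT\<^sup>*\<^sup>* (Inl b) Y" for Y
  proof (rule T_path_reach[OF that, of W])
    show "\<And>p q. RT p q \<Longrightarrow> {p,q} \<in> TE \<and> p \<in> W \<and> q \<in> W" unfolding RT_def by blast
    show "\<And>p q. RT (Inl p) (Inl q) \<Longrightarrow> {p,q} \<noteq> {a,b}"
    proof -
      fix p q assume "RT (Inl p) (Inl q)"
      then have "p \<noteq> a" "q \<noteq> a" using aW unfolding RT_def by auto
      then show "{p,q} \<noteq> {a,b}" by (auto simp: doubleton_eq_iff)
    qed
    show "\<And>t. Inr t \<in> W \<Longrightarrow> t \<in> triangles \<Longrightarrow> \<not> {a,b} \<subseteq> t"
      using bare_edge_not_in_triangle[OF bare_edge_sym[OF ntab]] by blast
    show "\<And>p. Inl p \<in> W \<Longrightarrow> p \<in> V" by (rule WV)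
    show "b \<in> V" by (rule bV)
  qed
  have T: "(\<forall>y. last (x1 # rest) = Inl y \<longrightarrow> reach V (E - {{a,b}}) b y) \<and>
      (\<forall>t. last (x1 # rest) = Inr t \<longrightarrow> (\<forall>p\<in>t \<inter> V. reach V (E - {{a,b}}) b p))"
  proof -
    have "RT\<^sup>*\<^sup>* (Inl b) (last (x1 # rest))" using rr x01 by simp
    from tr[OF this] show ?thesis .
  qed
  have "reach V (E - {{a,b}}) b a"
  proof (cases "last (x1 # rest)")
    case (Inl c)
    have rbc: "reach V (E - {{a,b}}) b c" using T Inl by simp
    have "bare_edge c a" using p(6) Inl x01 TE_Inl_Inl by simp
    then have ca: "{c,a} \<in> E" using bare_edgeD by blast
    have "c \<noteq> b" using p(8) Inl x01 by auto
    moreover have "c \<noteq> a" using edgeD[OF ca] by simp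
    ultimately have "{c,a} \<noteq> {a,b}" by (auto simp: doubleton_eq_iff)
    moreover have "c \<in> V" "a \<in> V" using edgeD[OF ca] by auto
    ultimately show ?thesis using reach_step[OF rbc] ca by blast
  next
    case (Inr t)
    have "t \<in> triangles" "a \<in> t" using p(6) Inr x01 TE_Inr_Inl by auto
    moreover have "a \<in> V" using ntab bare_edgeD edgeD by blast
    ultimately show ?thesis using T Inr by blast
  qed
  then show False using br reach_sym[of V "E - {{a,b}}" b a] by simp
qed

lemma no_path_around_triangle:
  assumes s: "successively T_adj Q" "Q \<noteq> []" "hd Q = Inl p" "last Q = Inl q" and sub: "set Q \<subseteq> TV"
    and t: "t \<in> triangles" "p \<in> t" "q \<in> t" "r \<in> t" "p \<noteq> q" "r \<noteq> p" "r \<noteq> q"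
    and nin: "Inr t \<notin> set Q" "Inl r \<notin> set Q"
  shows False
proof -
  have epq: "{p,q} \<in> E" using triangle_edge[OF t(1,2,3,5)] .
  have erp: "{r,p} \<in> E" "{r,q} \<in> E" using triangle_edge[OF t(1)] t by auto
  define W where "W = set Q"
  define RT where "RT x y \<longleftrightarrow> T_adj x y \<and> x \<in> W \<and> y \<in> W" for x y
  have sRT: "successively RT Q" using s(1) unfolding RT_def W_def by (rule successively_mono) auto
  have rr: "RT\<^sup>*\<^sup>* (Inl p) (Inl q)" using successively_rtranclp[OF sRT s(2)] s(3,4) by simp
  have pV: "p \<in> V - {r}" using triangle_subset[OF t(1)] t by auto
  have A1: "\<And>x y. RT x y \<Longrightarrow> {x,y} \<in> TE \<and> x \<in> W \<and> y \<in> W" unfolding RT_def by blast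
  have A2: "\<And>x y. RT (Inl x) (Inl y) \<Longrightarrow> {x,y} \<noteq> {p,q}"
  proof
    fix x y assume "RT (Inl x) (Inl y)" "{x,y} = {p,q}"
    then have "bare_edge x y" unfolding RT_def using TE_Inl_Inl by simp
    moreover have "(x = p \<and> y = q) \<or> (x = q \<and> y = p)" using \<open>{x,y} = {p,q}\<close> by (simp add: doubleton_eq_iff)
    ultimately show False using erp unfolding bare_edge_def by blast
  qed
  have A3: "\<And>t'. Inr t' \<in> W \<Longrightarrow> t' \<in> triangles \<Longrightarrow> \<not> {p,q} \<subseteq> t'"
  proof
    fix t' assume "Inr t' \<in> W" "t' \<in> triangles" "{p,q} \<subseteq> t'"
    then have "t' = t" using triangles_eq[OF _ t(1) t(5)] t(2,3) by blast
    then show False using \<open>Inr t' \<in> W\<close> nin(1) unfolding W_def by simp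
  qed
  have A4: "\<And>x. Inl x \<in> W \<Longrightarrow> x \<in> V - {r}" using sub nin(2) unfolding W_def TV_def by auto
  have tr: "(\<forall>y. Inl q = Inl y \<longrightarrow> reach (V - {r}) (E - {{p,q}}) p y) \<and>
    (\<forall>t'. Inl q = Inr t' \<longrightarrow> (\<forall>x\<in>t' \<inter> (V - {r}). reach (V - {r}) (E - {{p,q}}) p x))"
    using T_path_reach[OF rr A1 A2 A3 A4 pV] by simp
  then have "reach (V - {r}) (E - {{p,q}}) p q" by simp
  moreover have "\<not> reach (V - {r}) (E - {{p,q}}) p q" using triangle_edge_props[OF epq erp] by blast
  ultimately show False by simp
qed

lemma no_cycle_T_Inr:
  assumes c: "cycle_list T_adj L" and sub: "set L \<subseteq> TV" and h: "hd L = Inr t"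
  shows False
proof -
  obtain x0 x1 rest where p: "L = x0 # x1 # rest" "rest \<noteq> []" "distinct (x0 # x1 # rest)"
    "successively T_adj (x1 # rest)" "T_adj x0 x1" "T_adj (last (x1 # rest)) x0"
    "x0 \<notin> set (x1 # rest)" "last (x1 # rest) \<noteq> x1" using cycle_list_split[OF c] by blast
  have x0: "x0 = Inr t" using h p(1) by simp
  obtain b where b: "x1 = Inl b" "t \<in> triangles" "b \<in> t" using TE_Inr_nbr[of x1 t] p(5) x0 by (auto simp: insert_commute)
  obtain a where a: "last (x1 # rest) = Inl a" "a \<in> t" using TE_Inr_nbr[of "last (x1 # rest)" t] p(6) x0 by auto
  have ab: "a \<noteq> b" using p(8) a b by auto
  obtain c where c: "c \<in> t" "c \<noteq> a" "c \<noteq> b"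
  proof -
    obtain y z where "t = {a,y,z}" "a \<noteq> y" "a \<noteq> z" "y \<noteq> z" using triangle_decomp[OF b(2) a(2)] by blast
    then show ?thesis using that ab by auto
  qed
  have subQ: "set (x1 # rest) \<subseteq> TV" using sub p(1) by auto
  have tnin: "Inr t \<notin> set (x1 # rest)" using p(7) x0 by simp
  show False
  proof (cases "Inl c \<in> set (x1 # rest)")
    case False
    show False
      by (rule no_path_around_triangle[OF p(4) _ _ a(1) subQ b(2) b(3) a(2) c(1) ab[symmetric] c(3) c(2) tnin False])
         (simp_all add: b(1))
  next
    case True
    then obtain ys1 ys2 where sp: "x1 # rest = ys1 @ Inl c # ys2" by (meson split_list)
    have ys1: "ys1 \<noteq> []"
    proof
      assume "ys1 = []" then have "x1 = Inl c" using sp by simp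
      then show False using b(1) c(3) by simp
    qed
    define Q where "Q = ys1 @ [Inl c]"
    have sQ: "successively T_adj Q"
      using p(4) sp unfolding Q_def by (simp add: successively_append_iff)
    have hQ: "hd Q = Inl b" using ys1 sp b(1) unfolding Q_def by (cases ys1) auto
    have lQ: "last Q = Inl c" unfolding Q_def by simp
    have dist: "distinct (ys1 @ Inl c # ys2)" using p(3) sp by (metis distinct.simps(2))
    have "last (x1 # rest) \<in> set (Inl c # ys2)" using sp by (metis last_appendR last_in_set list.distinct(1))
    then have "Inl a \<notin> set ys1" using dist a(1) by auto
    then have anin: "Inl a \<notin> set Q" using c(2) unfolding Q_def by auto
    have tQ: "Inr t \<notin> set Q" using tnin sp unfolding Q_def by auto
    have subQ': "set Q \<subseteq> TV" using subQ sp unfolding Q_def by auto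
    show False
      by (rule no_path_around_triangle[OF sQ _ hQ lQ subQ' b(2) b(3) c(1) a(2) c(3)[symmetric] ab c(2)[symmetric] tQ anin])
         (simp add: Q_def)
  qed
qed

lemma no_cycle_T: "\<not> has_cycle TV TE"
proof
  assume "has_cycle TV TE"
  then obtain L where L: "cycle_list T_adj L" "set L \<subseteq> TV" using has_cycle_cycle_list by blast
  have Lne: "L \<noteq> []" and len: "length L \<ge> 3" using L unfolding cycle_list_def by auto
  show False
  proof (cases "\<exists>t. Inr t \<in> set L")
    case True
    then obtain t where "Inr t \<in> set L" by blast
    then obtain i where i: "i < length L" "L ! i = Inr t" by (meson in_set_conv_nth)
    have "hd (rotate i L) = L ! (i mod length L)" using Lne by (rule hd_rotate_conv_nth)
    then have "hd (rotate i L) = Inr t" using i by simp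
    moreover have "cycle_list T_adj (rotate i L)" using cycle_list_rotate[OF L(1)] .
    moreover have "set (rotate i L) \<subseteq> TV" using L(2) by simp
    ultimately show False using no_cycle_T_Inr by blast
  next
    case False
    have isl: "\<exists>a. L ! j = Inl a" if "j < length L" for j
    proof (cases "L ! j")
      case (Inl a) then show ?thesis by blast
    next
      case (Inr t) then show ?thesis using False that nth_mem by metis
    qed
    obtain a where a: "L ! 0 = Inl a" using isl len by fastforce
    obtain b where b: "L ! 1 = Inl b" using isl len by fastforce
    have "hd L = Inl a" using a Lne by (simp add: hd_conv_nth)
    then show False using no_cycle_T_Inl[OF L(1,2) _ b] by blast
  qed
qed

lemma tree_T: "tree TV TE" unfolding tree_def using graph_T connected_T no_cycle_T by blast

lemma connected: "connected_graph V E"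
proof -
  have "V \<noteq> {}" using card_V_ge_3 by auto
  then show ?thesis using connected_graph_iff[OF finite_V] reach_V by blast
qed

lemma obtained_from_T: "obtained_from_tree V E TV TE Inl"
proof -
  have inj: "inj_on Inl V" by (simp add: inj_on_def)
  have "bij_betw Inl V (construct_V TV TE)" unfolding construct_V_T using inj by (simp add: bij_betw_def)
  moreover have "{Inl u, Inl w} \<in> construct_E TV TE \<longleftrightarrow> {u,w} \<in> E" if "u \<in> V" "w \<in> V" for u w
    unfolding construct_E_T using image_edge_iff[OF inj graph_edges_in[OF g] that] .
  ultimately show ?thesis
    unfolding obtained_from_tree_def using tree_T card_TV degree_T_le_3 independent_T by auto
qed

end

lemma obtained_from_nat_tree_if_minimally_tough_claw_free:
  assumes "graph V E" "minimally_tough (1/2) V E" "claw_free V E"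
  shows "connected_graph V E \<and> (\<exists>(VT :: nat set) ET f. obtained_from_tree V E VT ET f)"
proof -
  interpret min_tough_claw_free V E using assms by unfold_locales
  show ?thesis using connected obtained_from_nat_tree[OF obtained_from_T] by blast
qed

theorem mainTheorem12:
  fixes V :: "'a set" and E :: "'a set set"
  assumes "graph V E"
  shows "(minimally_tough (1/2) V E \<and> claw_free V E) \<longleftrightarrow>
    (connected_graph V E \<and>
     (\<exists>(VT :: nat set) ET f.
        tree VT ET \<and> card VT \<ge> 3 \<and>
        (\<forall>v\<in>VT. degree ET v \<le> 3) \<and>
        independent ET {v \<in> VT. degree ET v = 1 \<or> degree ET v = 3} \<and>
        bij_betw f V (construct_V VT ET) \<and>
        (\<forall>u\<in>V. \<forall>w\<in>V. {u, w} \<in> E \<longleftrightarrow> {f u, f w} \<in> construct_E VT ET)))"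
proof -
  have "(minimally_tough (1/2) V E \<and> claw_free V E) \<longleftrightarrow>
      connected_graph V E \<and> (\<exists>(VT :: nat set) ET f. obtained_from_tree V E VT ET f)"
    using minimally_tough_claw_free_if_obtained_from_tree[OF assms]
      obtained_from_nat_tree_if_minimally_tough_claw_free[OF assms] by blast
  then show ?thesis unfolding obtained_from_tree_def .
qed

end
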